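(* Let $A$ be a finitely generated torsion $\Lambda$-module, $M=A^\circ$ its $\mathbb{Z}_p$-torsion submodule. (i) If $x\in M$ with $p\le p^l=\mathrm{ess.ord}(x)$ and $g\in\Lambda$ satisfies $gx=0$, then $g\equiv 0\bmod p^l$. (ii) There is a distinguished polynomial $G(T)\in\mathbb{Z}_p[T]$ such that $G(T)A\subseteq M$ and $\mathrm{ord}(y)=\mathrm{ess.ord}(y)$ for all $y\in G(T)A$. (iii) If $x\in A\setminus D(A)$ and $p^{\delta(x)}x=c+z$ with $c\in\mathcal{L}(A)$, $z\in M$, then $c\notin p\,\mathcal{L}(A)$.
   Context: $p$ is an odd prime, $\Lambda=\mathbb{Z}_p[[T]]$. For a finitely generated torsion $\Lambda$-module $A$: $A^\circ=M(A)$ is its $\mathbb{Z}_p$-torsion submodule; $\mathcal{L}(A)=\{x\in A:\ p\text{-rank}(\Lambda x)<\infty\}$; $D(A)=\mathcal{L}(A)+M(A)$ (the module of decomposable elements). For $x\in M(A)$, $\mathrm{ord}(x)=\min\{p^k: p^kx=0\}$ and the essential order $\mathrm{ess.ord}(x)$ is the common value of $\mathrm{ord}(T^jx)$ for all sufficiently large $j$. For $x\in A\setminus D(A)$, $\delta(x)=\min\{k>0: p^kx\in D(A)\}$. *)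

theory Defs
  imports "HOL-Algebra.Module" "HOL-Computational_Algebra.Primes"
begin

text \<open>A p-adic integer is represented by its sequence of truncations
  a n = (a mod p^n) in {0..<p^n}, compatible under reduction.\<close>

definition zp :: "nat \<Rightarrow> (nat \<Rightarrow> int) \<Rightarrow> bool" where
  "zp p a \<longleftrightarrow> (\<forall>n. 0 \<le> a n \<and> a n < int p ^ n) \<and> (\<forall>n. a n = a (Suc n) mod int p ^ n)"

definition zp_of_int :: "nat \<Rightarrow> int \<Rightarrow> nat \<Rightarrow> int" where
  "zp_of_int p c = (\<lambda>n. c mod int p ^ n)"

text \<open>An element of Lambda = Z_p[[T]] is a function f with f k the k-th
  coefficient (a p-adic integer), so f k n = (coefficient of T^k) mod p^n.\<close>

type_synonym lam = "nat \<Rightarrow> nat \<Rightarrow> int"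

definition lam_add :: "nat \<Rightarrow> lam \<Rightarrow> lam \<Rightarrow> lam" where
  "lam_add p f g = (\<lambda>k n. (f k n + g k n) mod int p ^ n)"

definition lam_mult :: "nat \<Rightarrow> lam \<Rightarrow> lam \<Rightarrow> lam" where
  "lam_mult p f g = (\<lambda>k n. (\<Sum>i\<le>k. f i n * g (k - i) n) mod int p ^ n)"

definition lam_const :: "(nat \<Rightarrow> int) \<Rightarrow> lam" where
  "lam_const a = (\<lambda>k n. if k = 0 then a n else 0)"

definition Lambda :: "nat \<Rightarrow> lam ring" where
  "Lambda p = \<lparr> carrier = {f. \<forall>k. zp p (f k)},
                monoid.mult = lam_mult p,
                one = lam_const (zp_of_int p 1),
                zero = (\<lambda>k n. 0),
                add = lam_add p \<rparr>"

definition lam_int :: "nat \<Rightarrow> int \<Rightarrow> lam" where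
  "lam_int p c = lam_const (zp_of_int p c)"

definition lam_T :: "nat \<Rightarrow> lam" where
  "lam_T p = (\<lambda>k n. if k = 1 then 1 mod int p ^ n else 0)"

definition distinguished :: "nat \<Rightarrow> lam \<Rightarrow> bool" where
  "distinguished p G \<longleftrightarrow> G \<in> carrier (Lambda p) \<and>
     (\<exists>d. G d = zp_of_int p 1 \<and> (\<forall>k>d. G k = (\<lambda>n. 0)) \<and>
          (\<forall>k<d. \<exists>b. zp p b \<and> G k = (\<lambda>n. (int p * b n) mod int p ^ n)))"

definition scal_submod :: "('r, 'a, 'm) module_scheme \<Rightarrow> 'r set \<Rightarrow> 'a set \<Rightarrow> bool" where
  "scal_submod A Sc H \<longleftrightarrow> H \<subseteq> carrier A \<and> \<zero>\<^bsub>A\<^esub> \<in> H \<and>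
     (\<forall>x\<in>H. \<forall>y\<in>H. x \<oplus>\<^bsub>A\<^esub> y \<in> H) \<and> (\<forall>a\<in>Sc. \<forall>x\<in>H. a \<odot>\<^bsub>A\<^esub> x \<in> H)"

definition gen_submod :: "('r, 'a, 'm) module_scheme \<Rightarrow> 'r set \<Rightarrow> 'a set \<Rightarrow> 'a set" where
  "gen_submod A Sc S = \<Inter>{H. scal_submod A Sc H \<and> S \<subseteq> H}"

definition zp_scalars :: "nat \<Rightarrow> lam set" where
  "zp_scalars p = {lam_const a | a. zp p a}"

definition fin_gen_Lambda :: "nat \<Rightarrow> (lam, 'a, 'm) module_scheme \<Rightarrow> bool" where
  "fin_gen_Lambda p A \<longleftrightarrow> (\<exists>S. finite S \<and> S \<subseteq> carrier A \<and>
       carrier A = gen_submod A (carrier (Lambda p)) S)"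

definition torsion_Lambda :: "nat \<Rightarrow> (lam, 'a, 'm) module_scheme \<Rightarrow> bool" where
  "torsion_Lambda p A \<longleftrightarrow> (\<forall>x\<in>carrier A. \<exists>g\<in>carrier (Lambda p).
       g \<noteq> \<zero>\<^bsub>Lambda p\<^esub> \<and> g \<odot>\<^bsub>A\<^esub> x = \<zero>\<^bsub>A\<^esub>)"

definition cyc :: "nat \<Rightarrow> (lam, 'a, 'm) module_scheme \<Rightarrow> 'a \<Rightarrow> 'a set" where
  "cyc p A x = {g \<odot>\<^bsub>A\<^esub> x | g. g \<in> carrier (Lambda p)}"

definition finite_p_rank :: "nat \<Rightarrow> (lam, 'a, 'm) module_scheme \<Rightarrow> 'a set \<Rightarrow> bool" where
  "finite_p_rank p A X \<longleftrightarrow> (\<exists>S. finite S \<and> S \<subseteq> X \<and> X = gen_submod A (zp_scalars p) S)"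

definition Mtors :: "nat \<Rightarrow> (lam, 'a, 'm) module_scheme \<Rightarrow> 'a set" where
  "Mtors p A = {x \<in> carrier A. \<exists>k. lam_int p (int p ^ k) \<odot>\<^bsub>A\<^esub> x = \<zero>\<^bsub>A\<^esub>}"

definition Lpart :: "nat \<Rightarrow> (lam, 'a, 'm) module_scheme \<Rightarrow> 'a set" where
  "Lpart p A = {x \<in> carrier A. finite_p_rank p A (cyc p A x)}"

definition Dpart :: "nat \<Rightarrow> (lam, 'a, 'm) module_scheme \<Rightarrow> 'a set" where
  "Dpart p A = {c \<oplus>\<^bsub>A\<^esub> z | c z. c \<in> Lpart p A \<and> z \<in> Mtors p A}"

definition ord_p :: "nat \<Rightarrow> (lam, 'a, 'm) module_scheme \<Rightarrow> 'a \<Rightarrow> nat" where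
  "ord_p p A x = p ^ (LEAST k. lam_int p (int p ^ k) \<odot>\<^bsub>A\<^esub> x = \<zero>\<^bsub>A\<^esub>)"

definition ess_ord :: "nat \<Rightarrow> (lam, 'a, 'm) module_scheme \<Rightarrow> 'a \<Rightarrow> nat" where
  "ess_ord p A x = (THE e. \<exists>J. \<forall>j::nat. j \<ge> J \<longrightarrow>
      ord_p p A ((lam_T p [^]\<^bsub>Lambda p\<^esub> j) \<odot>\<^bsub>A\<^esub> x) = e)"

definition delta :: "nat \<Rightarrow> (lam, 'a, 'm) module_scheme \<Rightarrow> 'a \<Rightarrow> nat" where
  "delta p A x = (LEAST k. 0 < k \<and> lam_int p (int p ^ k) \<odot>\<^bsub>A\<^esub> x \<in> Dpart p A)"

end

(*
  Two Banach fixed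
  point arguments, for the p-adic and for the T-adic topology, give the unit criterion
  (f is a unit if its constant term is prime to p) and the Weierstrass preparation
  theorem (every f that is not divisible by p has a distinguished multiple).

  (i) Write g = p^m u with u not divisible by p, and suppose m < l.  For J large,
  y = p^(l-1) T^J x satisfies p y = 0 and u y = 0; since u = p a + T^r v with v a unit,
  T^r y = 0, i.e. p^(l-1) kills T^(r+J) x, which has order p^l.

  (ii) By preparation, the generators of A are killed by p^K times distinguished
  polynomials, whose product G0 satisfies p^K G0 A = 0.  A finitely generated module killed
  by p^K has its T-power torsion killed by a fixed T^N: by induction on K this reduces to
  modules killed by p, i.e. over \<Lambda>/p = F_p[[T]], where every ideal is principal.  For
  G = T^N G0 no p^e G a is a nonzero T-power torsion element, so ord and ess.ord agree.

  (iii) If c = p c' with c' in L(A), then p^(delta x - 1) x lies in D(A), contradicting the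
  minimality of delta x.
*)
theory Submission
  imports Defs
begin

section \<open>Coefficient calculus in \<open>\<Lambda>\<close>\<close>

lemma zp_trunc: "zp p a \<Longrightarrow> n \<le> m \<Longrightarrow> a n = a m mod int p ^ n"
proof (induction m)
  case 0
  then have "0 \<le> a 0 \<and> a 0 < 1" unfolding zp_def by (metis power_0)
  then show ?case using 0 by simp
next
  case (Suc m)
  show ?case
  proof (cases "n = Suc m")
    case True
    have "0 \<le> a n \<and> a n < int p ^ n" using Suc.prems(1) unfolding zp_def by blast
    then show ?thesis using True by simp
  next
    case False
    then have "a n = a m mod int p ^ n" using Suc by auto
    also have "a m = a (Suc m) mod int p ^ m" using Suc.prems(1) unfolding zp_def by blast
    also have "\<dots> mod int p ^ n = a (Suc m) mod int p ^ n"
      using False Suc.prems(2) by (metis mod_mod_cancel le_imp_power_dvd of_nat_power le_Suc_eq)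
    finally show ?thesis .
  qed
qed

lemma inverse_mod_prime:
  assumes "prime p" and "\<not> int p dvd x"
  shows "\<exists>a. (a * x) mod int p = 1"
proof -
  have "coprime (int p) x" using assms by (simp add: prime_imp_coprime)
  then obtain a b where "b * int p + a * x = 1"
    using bezout_int[of "int p" x] by auto
  then have "a * x - 1 = - b * int p"
    by linarith
  then have "int p dvd a * x - 1"
    by simp
  then have "(a * x) mod int p = 1 mod int p"
    by (simp add: mod_eq_dvd_iff)
  then show ?thesis using prime_gt_1_nat[OF assms(1)] by auto
qed

locale iwasawa_algebra = R: cring "Lambda p" for p :: nat +
  assumes prime_p: "prime p"
begin

abbreviation L where "L \<equiv> Lambda p"

text \<open>For \<open>f, g \<in> \<Lambda>\<close>,
  \<open>p_pow_dvd m f\<close>, \<open>eq_mod_p_pow n f g\<close> and \<open>eq_mod_T_pow k f g\<close> say \<open>p\<^sup>m | f\<close>,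
  \<open>f \<equiv> g (mod p\<^sup>n)\<close> and \<open>f \<equiv> g (mod T\<^sup>k)\<close>.\<close>

definition ppow :: "nat \<Rightarrow> lam" where
  "ppow k = lam_int p (int p ^ k)"

definition Tpow :: "nat \<Rightarrow> lam" where
  "Tpow r = (\<lambda>k n. if k = r then 1 mod int p ^ n else 0)"

definition trunc :: "nat \<Rightarrow> lam \<Rightarrow> lam" where
  "trunc r f = (\<lambda>k n. if k < r then f k n else 0)"

definition shift :: "nat \<Rightarrow> lam \<Rightarrow> lam" where
  "shift r f = (\<lambda>k n. f (k + r) n)"

definition p_pow_dvd :: "nat \<Rightarrow> lam \<Rightarrow> bool" where
  "p_pow_dvd m f \<longleftrightarrow> (\<forall>i. f i m = 0)"

definition eq_mod_p_pow :: "nat \<Rightarrow> lam \<Rightarrow> lam \<Rightarrow> bool" where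
  "eq_mod_p_pow n f g \<longleftrightarrow> (\<forall>i. f i n = g i n)"

definition eq_mod_T_pow :: "nat \<Rightarrow> lam \<Rightarrow> lam \<Rightarrow> bool" where
  "eq_mod_T_pow k f g \<longleftrightarrow> (\<forall>i<k. f i = g i)"

lemma p_gt_1: "p > 1"
  using prime_p prime_gt_1_nat by blast

lemma p_power_pos [simp]: "(0::int) < int p ^ n"
  using p_gt_1 by simp

lemma carrier_Lambda: "f \<in> carrier L \<longleftrightarrow> (\<forall>k. zp p (f k))"
  by (simp add: Lambda_def)

lemma mult_Lambda: "f \<otimes>\<^bsub>L\<^esub> g = lam_mult p f g"
  by (simp add: Lambda_def)

lemma add_Lambda: "f \<oplus>\<^bsub>L\<^esub> g = lam_add p f g"
  by (simp add: Lambda_def)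

lemma zero_Lambda: "\<zero>\<^bsub>L\<^esub> = (\<lambda>k n. 0)"
  by (simp add: Lambda_def)

lemma one_Lambda: "\<one>\<^bsub>L\<^esub> = Tpow 0"
  by (simp add: Lambda_def lam_const_def zp_of_int_def Tpow_def)

lemma lam_int_eq: "lam_int p c = (\<lambda>k n. if k = 0 then c mod int p ^ n else 0)"
  by (simp add: lam_int_def lam_const_def zp_of_int_def)

lemma coeff_bounds: "f \<in> carrier L \<Longrightarrow> 0 \<le> f k n \<and> f k n < int p ^ n"
  using carrier_Lambda zp_def by blast

lemma coeff_mod [simp]: "f \<in> carrier L \<Longrightarrow> f k n mod int p ^ n = f k n"
  using coeff_bounds by simp

lemma coeff_level_0 [simp]: "f \<in> carrier L \<Longrightarrow> f k 0 = 0"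
  using coeff_bounds[of f k 0] by simp

lemma coeff_trunc: "f \<in> carrier L \<Longrightarrow> n \<le> m \<Longrightarrow> f k n = f k m mod int p ^ n"
  using zp_trunc carrier_Lambda by blast

lemma coeff_Suc_mod: "f \<in> carrier L \<Longrightarrow> f k (Suc n) mod int p ^ n = f k n"
  using coeff_trunc[of f n "Suc n" k] by simp

lemma mod_p_power_Suc_mod: "a mod int p ^ Suc n mod int p ^ n = a mod int p ^ n"
  by (metis mod_mod_cancel le_imp_power_dvd of_nat_power le_SucI order_refl)

lemma carrier_LambdaI:
  assumes "\<And>k n. f k n = g k n mod int p ^ n"
    and "\<And>k n. g k n mod int p ^ n = g k (Suc n) mod int p ^ n"
  shows "f \<in> carrier L"
  unfolding carrier_Lambda zp_def
proof (intro allI conjI)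
  fix k n
  show "0 \<le> f k n" "f k n < int p ^ n" using assms(1)[of k n] p_power_pos[of n] by auto
  have "f k (Suc n) mod int p ^ n = g k (Suc n) mod int p ^ n"
    unfolding assms(1)[of k "Suc n"] by (rule mod_p_power_Suc_mod)
  then show "f k n = f k (Suc n) mod int p ^ n" using assms by metis
qed

lemma carrier_Lambda_constI: "(\<And>k n. f k n = g k mod int p ^ n) \<Longrightarrow> f \<in> carrier L"
  by (rule carrier_LambdaI[where g = "\<lambda>k n. g k"]) auto

lemma Tpow_closed [simp]: "Tpow r \<in> carrier L"
  by (rule carrier_Lambda_constI[where g = "\<lambda>k. if k = r then 1 else 0"]) (simp add: Tpow_def)

lemma lam_int_closed [simp]: "lam_int p c \<in> carrier L"
  by (rule carrier_Lambda_constI[where g = "\<lambda>k. if k = 0 then c else 0"]) (simp add: lam_int_eq)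

lemma trunc_closed [simp]: "f \<in> carrier L \<Longrightarrow> trunc r f \<in> carrier L"
  by (rule carrier_LambdaI[where g = "trunc r f"]) (auto simp: trunc_def coeff_Suc_mod)

lemma shift_closed [simp]: "f \<in> carrier L \<Longrightarrow> shift r f \<in> carrier L"
  unfolding carrier_Lambda shift_def by simp

lemma minus_Lambda:
  assumes f: "f \<in> carrier L"
  shows "\<ominus>\<^bsub>L\<^esub> f = (\<lambda>k n. (- f k n) mod int p ^ n)"
proof -
  let ?g = "\<lambda>k n. (- f k n) mod int p ^ n"
  have g: "?g \<in> carrier L"
    by (rule carrier_LambdaI[where g = "\<lambda>k n. - f k n"])
      (metis coeff_Suc_mod[OF f] mod_minus_eq)+
  have "?g \<oplus>\<^bsub>L\<^esub> f = \<zero>\<^bsub>L\<^esub>"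
    unfolding add_Lambda zero_Lambda lam_add_def
    by (intro ext) (metis add.left_inverse mod_0 mod_add_left_eq)
  then show ?thesis using R.minus_equality[OF _ f g] by simp
qed

lemma mult_Tpow:
  assumes "h \<in> carrier L"
  shows "Tpow a \<otimes>\<^bsub>L\<^esub> h = (\<lambda>k n. if a \<le> k then h (k - a) n else 0)"
proof (intro ext)
  fix k n
  have "(\<Sum>i\<le>k. Tpow a i n * h (k - i) n)
      = (\<Sum>i\<le>k. if a = i then (1 mod int p ^ n) * h (k - a) n else 0)"
    by (rule sum.cong) (auto simp: Tpow_def)
  then show "(Tpow a \<otimes>\<^bsub>L\<^esub> h) k n = (if a \<le> k then h (k - a) n else 0)"
    unfolding mult_Lambda lam_mult_def using assms by (simp add: sum.delta mod_mult_left_eq)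
qed

lemma mult_lam_int:
  assumes "h \<in> carrier L"
  shows "lam_int p c \<otimes>\<^bsub>L\<^esub> h = (\<lambda>k n. (c * h k n) mod int p ^ n)"
proof (intro ext)
  fix k n
  have "(\<Sum>i\<le>k. lam_int p c i n * h (k - i) n)
      = (\<Sum>i\<le>k. if 0 = i then (c mod int p ^ n) * h k n else 0)"
    by (rule sum.cong) (auto simp: lam_int_eq)
  then show "(lam_int p c \<otimes>\<^bsub>L\<^esub> h) k n = (c * h k n) mod int p ^ n"
    unfolding mult_Lambda lam_mult_def by (simp add: sum.delta mod_mult_left_eq)
qed

lemma lam_int_mult: "lam_int p a \<otimes>\<^bsub>L\<^esub> lam_int p b = lam_int p (a * b)"
  by (subst mult_lam_int)
    (auto simp: lam_int_eq mod_mult_right_eq intro!: ext lam_int_closed[unfolded lam_int_eq])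

lemma lam_int_one [simp]: "lam_int p 1 = \<one>\<^bsub>L\<^esub>"
  by (simp add: one_Lambda lam_int_eq Tpow_def)

lemma ppow_closed [simp]: "ppow k \<in> carrier L"
  by (simp add: ppow_def)

lemma ppow_0 [simp]: "ppow 0 = \<one>\<^bsub>L\<^esub>"
  by (simp add: ppow_def)

lemma mult_ppow: "h \<in> carrier L \<Longrightarrow> ppow k \<otimes>\<^bsub>L\<^esub> h = (\<lambda>i n. (int p ^ k * h i n) mod int p ^ n)"
  by (simp add: ppow_def mult_lam_int)

lemma ppow_add: "ppow a \<otimes>\<^bsub>L\<^esub> ppow b = ppow (a + b)"
  by (simp add: ppow_def lam_int_mult power_add)

lemma Tpow_add: "Tpow a \<otimes>\<^bsub>L\<^esub> Tpow b = Tpow (a + b)"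
  by (subst mult_Tpow) (auto simp: Tpow_def intro!: ext Tpow_closed[unfolded Tpow_def])

lemma lam_T_pow: "lam_T p [^]\<^bsub>L\<^esub> r = Tpow r"
proof (induction r)
  case 0
  then show ?case by (simp add: one_Lambda)
next
  case (Suc r)
  have "lam_T p = Tpow 1" by (simp add: lam_T_def Tpow_def)
  then have "lam_T p [^]\<^bsub>L\<^esub> Suc r = Tpow 1 \<otimes>\<^bsub>L\<^esub> Tpow r"
    using Suc R.m_comm by simp
  then show ?case by (simp add: Tpow_add)
qed

lemma trunc_shift_decomp:
  assumes "u \<in> carrier L"
  shows "u = trunc r u \<oplus>\<^bsub>L\<^esub> Tpow r \<otimes>\<^bsub>L\<^esub> shift r u"
  unfolding add_Lambda lam_add_def mult_Tpow[OF shift_closed[OF assms]]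
  by (intro ext) (auto simp: trunc_def shift_def assms)

section \<open>p-adic and T-adic approximation\<close>

lemma eq_mod_p_pow_add:
  "eq_mod_p_pow n f f' \<Longrightarrow> eq_mod_p_pow n g g' \<Longrightarrow> eq_mod_p_pow n (f \<oplus>\<^bsub>L\<^esub> g) (f' \<oplus>\<^bsub>L\<^esub> g')"
  unfolding eq_mod_p_pow_def add_Lambda lam_add_def by simp

lemma eq_mod_p_pow_minus:
  "f \<in> carrier L \<Longrightarrow> f' \<in> carrier L \<Longrightarrow> eq_mod_p_pow n f f' \<Longrightarrow>
   eq_mod_p_pow n (\<ominus>\<^bsub>L\<^esub> f) (\<ominus>\<^bsub>L\<^esub> f')"
  unfolding eq_mod_p_pow_def by (simp add: minus_Lambda)

lemma eq_mod_p_pow_shift: "eq_mod_p_pow n f f' \<Longrightarrow> eq_mod_p_pow n (shift r f) (shift r f')"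
  unfolding eq_mod_p_pow_def shift_def by simp

lemma eq_mod_p_pow_trans: "eq_mod_p_pow n f g \<Longrightarrow> eq_mod_p_pow n g h \<Longrightarrow> eq_mod_p_pow n f h"
  unfolding eq_mod_p_pow_def by simp

lemma eq_mod_p_pow_0: "f \<in> carrier L \<Longrightarrow> g \<in> carrier L \<Longrightarrow> eq_mod_p_pow 0 f g"
  unfolding eq_mod_p_pow_def by simp

lemma eq_mod_p_pow_ext: "(\<And>n. eq_mod_p_pow n f g) \<Longrightarrow> f = g"
  unfolding eq_mod_p_pow_def by (intro ext) auto

lemma p_pow_dvd_0 [simp]: "f \<in> carrier L \<Longrightarrow> p_pow_dvd 0 f"
  unfolding p_pow_dvd_def by simp

lemma p_pow_dvd_coeff:
  assumes "f \<in> carrier L" "p_pow_dvd k f" "k \<le> m"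
  shows "int p ^ k dvd f i m"
  using assms coeff_trunc[OF assms(1,3)] unfolding p_pow_dvd_def by (simp add: mod_0_imp_dvd)

lemma p_pow_dvd_ppow_mult: "h \<in> carrier L \<Longrightarrow> p_pow_dvd k (ppow k \<otimes>\<^bsub>L\<^esub> h)"
  unfolding p_pow_dvd_def by (simp add: mult_ppow)

lemma p_pow_dvd_factor:
  assumes f: "f \<in> carrier L" and dvd: "p_pow_dvd k f"
  shows "\<exists>h\<in>carrier L. f = ppow k \<otimes>\<^bsub>L\<^esub> h"
proof -
  define h where "h = (\<lambda>i n. f i (n + k) div int p ^ k)"
  have quot: "f i (n + k) = int p ^ k * h i n" for i n
    using p_pow_dvd_coeff[OF f dvd, of "n + k" i] by (simp add: h_def)
  have h: "h \<in> carrier L"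
    unfolding carrier_Lambda zp_def
  proof (intro allI conjI)
    fix i n
    have bounds: "0 \<le> f i (n + k)" "f i (n + k) < int p ^ k * int p ^ n"
      using coeff_bounds[OF f, of i "n + k"] by (simp_all add: power_add mult.commute)
    then show "0 \<le> h i n" "h i n < int p ^ n"
      unfolding quot using p_power_pos[of k] by (simp_all add: zero_le_mult_iff)
    have "f i (n + k) = f i (Suc n + k) mod int p ^ (n + k)"
      using coeff_trunc[OF f, of "n + k" "Suc n + k"] by simp
    then have "int p ^ k * h i n = int p ^ k * (h i (Suc n) mod int p ^ n)"
      unfolding quot by (simp add: power_add mult.commute mod_mult_mult1)
    then show "h i n = h i (Suc n) mod int p ^ n" using p_gt_1 by simp
  qed
  have "f = ppow k \<otimes>\<^bsub>L\<^esub> h"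
  proof (intro ext)
    fix i n
    have "f i n = f i (n + k) mod int p ^ n" using coeff_trunc[OF f] by simp
    then show "f i n = (ppow k \<otimes>\<^bsub>L\<^esub> h) i n" by (simp add: mult_ppow[OF h] quot)
  qed
  then show ?thesis using h by blast
qed

lemma p_pow_dvd_mult:
  assumes "b \<in> carrier L" "h \<in> carrier L" "p_pow_dvd k b"
  shows "p_pow_dvd k (b \<otimes>\<^bsub>L\<^esub> h)"
proof -
  obtain b' where "b' \<in> carrier L" "b = ppow k \<otimes>\<^bsub>L\<^esub> b'"
    using p_pow_dvd_factor assms(1,3) by blast
  then show ?thesis using assms(2) p_pow_dvd_ppow_mult by (simp add: R.m_assoc)
qed

lemma eq_mod_p_pow_Suc_mult:
  assumes b: "b \<in> carrier L" and f: "f \<in> carrier L" and g: "g \<in> carrier L"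
    and "p_pow_dvd 1 b" and fg: "eq_mod_p_pow n f g"
  shows "eq_mod_p_pow (Suc n) (b \<otimes>\<^bsub>L\<^esub> f) (b \<otimes>\<^bsub>L\<^esub> g)"
  unfolding eq_mod_p_pow_def mult_Lambda lam_mult_def
proof
  fix i
  let ?N = "Suc n"
  have "int p ^ ?N dvd (\<Sum>j\<le>i. b j ?N * f (i - j) ?N) - (\<Sum>j\<le>i. b j ?N * g (i - j) ?N)"
    unfolding sum_subtractf[symmetric]
  proof (rule dvd_sum)
    fix j
    have "int p dvd b j ?N" using p_pow_dvd_coeff[OF b \<open>p_pow_dvd 1 b\<close>, of ?N j] by simp
    moreover have "int p ^ n dvd f (i - j) ?N - g (i - j) ?N"
      using coeff_Suc_mod[OF f] coeff_Suc_mod[OF g] fg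
      unfolding eq_mod_p_pow_def by (metis mod_eq_dvd_iff)
    ultimately have "int p * int p ^ n dvd b j ?N * (f (i - j) ?N - g (i - j) ?N)"
      by (rule mult_dvd_mono)
    then show "int p ^ ?N dvd b j ?N * f (i - j) ?N - b j ?N * g (i - j) ?N"
      by (simp add: right_diff_distrib)
  qed
  then show "(\<Sum>j\<le>i. b j ?N * f (i - j) ?N) mod int p ^ ?N
      = (\<Sum>j\<le>i. b j ?N * g (i - j) ?N) mod int p ^ ?N"
    by (simp add: mod_eq_dvd_iff)
qed

lemma eq_mod_T_pow_mult:
  "eq_mod_T_pow k f g \<Longrightarrow> eq_mod_T_pow k (h \<otimes>\<^bsub>L\<^esub> f) (h \<otimes>\<^bsub>L\<^esub> g)"
  unfolding eq_mod_T_pow_def mult_Lambda lam_mult_def by auto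

lemma eq_mod_T_pow_add:
  "eq_mod_T_pow k f f' \<Longrightarrow> eq_mod_T_pow k g g' \<Longrightarrow> eq_mod_T_pow k (f \<oplus>\<^bsub>L\<^esub> g) (f' \<oplus>\<^bsub>L\<^esub> g')"
  unfolding eq_mod_T_pow_def add_Lambda lam_add_def by simp

lemma eq_mod_T_pow_minus:
  "f \<in> carrier L \<Longrightarrow> f' \<in> carrier L \<Longrightarrow> eq_mod_T_pow k f f' \<Longrightarrow>
   eq_mod_T_pow k (\<ominus>\<^bsub>L\<^esub> f) (\<ominus>\<^bsub>L\<^esub> f')"
  unfolding eq_mod_T_pow_def by (simp add: minus_Lambda)

lemma eq_mod_T_pow_Suc_mult_T:
  "f \<in> carrier L \<Longrightarrow> g \<in> carrier L \<Longrightarrow> eq_mod_T_pow k f g \<Longrightarrow>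
   eq_mod_T_pow (Suc k) (Tpow 1 \<otimes>\<^bsub>L\<^esub> f) (Tpow 1 \<otimes>\<^bsub>L\<^esub> g)"
  unfolding eq_mod_T_pow_def by (auto simp: mult_Tpow)

lemma eq_mod_T_pow_trans: "eq_mod_T_pow k f g \<Longrightarrow> eq_mod_T_pow k g h \<Longrightarrow> eq_mod_T_pow k f h"
  unfolding eq_mod_T_pow_def by simp

lemma eq_mod_T_pow_mono: "eq_mod_T_pow k f g \<Longrightarrow> m \<le> k \<Longrightarrow> eq_mod_T_pow m f g"
  unfolding eq_mod_T_pow_def by simp

lemma p_adic_limit:
  assumes ys: "\<And>k. ys k \<in> carrier L" and step: "\<And>k. eq_mod_p_pow k (ys (Suc k)) (ys k)"
  shows "\<exists>Y\<in>carrier L. \<forall>n. eq_mod_p_pow n Y (ys n)"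
proof -
  define Y :: lam where "Y = (\<lambda>i n. ys n i n)"
  have "Y \<in> carrier L"
    unfolding carrier_Lambda zp_def
  proof (intro allI conjI)
    fix i n
    show "0 \<le> Y i n" "Y i n < int p ^ n" using coeff_bounds[OF ys] by (auto simp: Y_def)
    have "Y i (Suc n) mod int p ^ n = ys (Suc n) i n"
      unfolding Y_def using coeff_Suc_mod[OF ys] by simp
    also have "\<dots> = Y i n" using step[of n] by (simp add: eq_mod_p_pow_def Y_def)
    finally show "Y i n = Y i (Suc n) mod int p ^ n" by simp
  qed
  moreover have "eq_mod_p_pow n Y (ys n)" for n by (simp add: eq_mod_p_pow_def Y_def)
  ultimately show ?thesis by blast
qed

lemma T_adic_limit:
  assumes ws: "\<And>k. ws k \<in> carrier L" and ws_step: "\<And>k. eq_mod_T_pow k (ws (Suc k)) (ws k)"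
  shows "\<exists>W\<in>carrier L. \<forall>k. eq_mod_T_pow k W (ws k)"
proof -
  have chain: "eq_mod_T_pow k (ws m) (ws k)" if "k \<le> m" for k m
    using that
  proof (induction m rule: dec_induct)
    case base
    then show ?case by (simp add: eq_mod_T_pow_def)
  next
    case (step m)
    then show ?case using ws_step[of m] eq_mod_T_pow_mono eq_mod_T_pow_trans by blast
  qed
  define W :: lam where "W = (\<lambda>i. ws (Suc i) i)"
  have "W \<in> carrier L" using ws by (simp add: carrier_Lambda W_def)
  moreover have "eq_mod_T_pow k W (ws k)" for k
    unfolding eq_mod_T_pow_def W_def
  proof (intro allI impI)
    fix i assume "i < k"
    then show "ws (Suc i) i = ws k i" using chain[of "Suc i" k] by (simp add: eq_mod_T_pow_def)
  qed
  ultimately show ?thesis by blast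
qed

lemma p_adic_fixpoint:
  assumes closed: "\<And>y. y \<in> carrier L \<Longrightarrow> \<Phi> y \<in> carrier L"
    and contr: "\<And>n y y'. y \<in> carrier L \<Longrightarrow> y' \<in> carrier L \<Longrightarrow> eq_mod_p_pow n y y' \<Longrightarrow>
      eq_mod_p_pow (Suc n) (\<Phi> y) (\<Phi> y')"
  shows "\<exists>Y\<in>carrier L. \<Phi> Y = Y"
proof -
  define ys where "ys k = (\<Phi> ^^ k) \<zero>\<^bsub>L\<^esub>" for k
  have ys_Suc: "ys (Suc k) = \<Phi> (ys k)" for k by (simp add: ys_def)
  have ys: "ys k \<in> carrier L" for k by (induction k) (simp_all add: ys_def closed)
  have "eq_mod_p_pow k (ys (Suc k)) (ys k)" for k
  proof (induction k)
    case 0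
    then show ?case using ys by (simp add: eq_mod_p_pow_0)
  next
    case (Suc k)
    have "eq_mod_p_pow (Suc k) (\<Phi> (ys (Suc k))) (\<Phi> (ys k))" by (rule contr[OF ys ys Suc.IH])
    then show ?case by (simp only: ys_Suc)
  qed
  then obtain Y where Y: "Y \<in> carrier L" and approx: "\<And>n. eq_mod_p_pow n Y (ys n)"
    using p_adic_limit ys by blast
  have "eq_mod_p_pow n (\<Phi> Y) Y" for n
  proof (cases n)
    case 0
    then show ?thesis using closed Y by (simp add: eq_mod_p_pow_0)
  next
    case (Suc k)
    have "eq_mod_p_pow (Suc k) (\<Phi> Y) (ys (Suc k))"
      unfolding ys_Suc using contr[OF Y ys approx] .
    then show ?thesis using Suc approx eq_mod_p_pow_trans by (simp add: eq_mod_p_pow_def)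
  qed
  then show ?thesis using Y eq_mod_p_pow_ext by blast
qed

lemma T_adic_fixpoint:
  assumes closed: "\<And>y. y \<in> carrier L \<Longrightarrow> \<Phi> y \<in> carrier L"
    and contr: "\<And>k y y'. y \<in> carrier L \<Longrightarrow> y' \<in> carrier L \<Longrightarrow> eq_mod_T_pow k y y' \<Longrightarrow>
      eq_mod_T_pow (Suc k) (\<Phi> y) (\<Phi> y')"
  shows "\<exists>W\<in>carrier L. \<Phi> W = W"
proof -
  define ws where "ws k = (\<Phi> ^^ k) \<zero>\<^bsub>L\<^esub>" for k
  have ws_Suc: "ws (Suc k) = \<Phi> (ws k)" for k by (simp add: ws_def)
  have ws: "ws k \<in> carrier L" for k by (induction k) (simp_all add: ws_def closed)
  have "eq_mod_T_pow k (ws (Suc k)) (ws k)" for k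
  proof (induction k)
    case 0
    then show ?case by (simp add: eq_mod_T_pow_def)
  next
    case (Suc k)
    have "eq_mod_T_pow (Suc k) (\<Phi> (ws (Suc k))) (\<Phi> (ws k))" by (rule contr[OF ws ws Suc.IH])
    then show ?case by (simp only: ws_Suc)
  qed
  then obtain W where W: "W \<in> carrier L" and approx: "\<And>k. eq_mod_T_pow k W (ws k)"
    using T_adic_limit ws by blast
  have "\<Phi> W i = W i" for i
    using contr[OF W ws approx[of i]] approx[of "Suc i"] by (simp add: eq_mod_T_pow_def ws_Suc)
  then show ?thesis using W by blast
qed

section \<open>Units and the Weierstrass preparation theorem\<close>

lemma geometric_inverse:
  assumes b: "b \<in> carrier L" and y: "y \<in> carrier L"
    and fixed: "y = \<one>\<^bsub>L\<^esub> \<ominus>\<^bsub>L\<^esub> b \<otimes>\<^bsub>L\<^esub> y"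
  shows "(\<one>\<^bsub>L\<^esub> \<oplus>\<^bsub>L\<^esub> b) \<otimes>\<^bsub>L\<^esub> y = \<one>\<^bsub>L\<^esub>"
proof -
  have "(\<one>\<^bsub>L\<^esub> \<oplus>\<^bsub>L\<^esub> b) \<otimes>\<^bsub>L\<^esub> y = y \<oplus>\<^bsub>L\<^esub> b \<otimes>\<^bsub>L\<^esub> y"
    using b y by (simp add: R.l_distr)
  also have "\<dots> = \<one>\<^bsub>L\<^esub>"
    using b y by (subst (1) fixed) (simp add: R.minus_eq R.a_assoc R.l_neg)
  finally show ?thesis .
qed

lemma unit_one_plus_p_multiple:
  assumes b: "b \<in> carrier L" and "p_pow_dvd 1 b"
  shows "\<exists>w\<in>carrier L. (\<one>\<^bsub>L\<^esub> \<oplus>\<^bsub>L\<^esub> b) \<otimes>\<^bsub>L\<^esub> w = \<one>\<^bsub>L\<^esub>"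
proof -
  have "\<exists>Y\<in>carrier L. \<one>\<^bsub>L\<^esub> \<ominus>\<^bsub>L\<^esub> b \<otimes>\<^bsub>L\<^esub> Y = Y"
  proof (rule p_adic_fixpoint)
    fix n y y' assume y: "y \<in> carrier L" and y': "y' \<in> carrier L" and "eq_mod_p_pow n y y'"
    then have "eq_mod_p_pow (Suc n) (b \<otimes>\<^bsub>L\<^esub> y) (b \<otimes>\<^bsub>L\<^esub> y')"
      using b assms(2) by (intro eq_mod_p_pow_Suc_mult)
    then show "eq_mod_p_pow (Suc n) (\<one>\<^bsub>L\<^esub> \<ominus>\<^bsub>L\<^esub> b \<otimes>\<^bsub>L\<^esub> y) (\<one>\<^bsub>L\<^esub> \<ominus>\<^bsub>L\<^esub> b \<otimes>\<^bsub>L\<^esub> y')"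
      unfolding R.minus_eq using b y y'
      by (intro eq_mod_p_pow_add eq_mod_p_pow_minus) (simp_all add: eq_mod_p_pow_def)
  qed (use b in simp)
  then show ?thesis using geometric_inverse[OF b] by metis
qed

lemma unit_one_plus_T_multiple:
  assumes s: "s \<in> carrier L"
  shows "\<exists>w\<in>carrier L. (\<one>\<^bsub>L\<^esub> \<oplus>\<^bsub>L\<^esub> Tpow 1 \<otimes>\<^bsub>L\<^esub> s) \<otimes>\<^bsub>L\<^esub> w = \<one>\<^bsub>L\<^esub>"
proof -
  have "\<exists>Y\<in>carrier L. \<one>\<^bsub>L\<^esub> \<ominus>\<^bsub>L\<^esub> (Tpow 1 \<otimes>\<^bsub>L\<^esub> s) \<otimes>\<^bsub>L\<^esub> Y = Y"
  proof (rule T_adic_fixpoint)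
    fix k y y' assume y: "y \<in> carrier L" and y': "y' \<in> carrier L" and "eq_mod_T_pow k y y'"
    then have "eq_mod_T_pow (Suc k) (Tpow 1 \<otimes>\<^bsub>L\<^esub> (s \<otimes>\<^bsub>L\<^esub> y)) (Tpow 1 \<otimes>\<^bsub>L\<^esub> (s \<otimes>\<^bsub>L\<^esub> y'))"
      using s by (intro eq_mod_T_pow_Suc_mult_T eq_mod_T_pow_mult) auto
    then show "eq_mod_T_pow (Suc k) (\<one>\<^bsub>L\<^esub> \<ominus>\<^bsub>L\<^esub> (Tpow 1 \<otimes>\<^bsub>L\<^esub> s) \<otimes>\<^bsub>L\<^esub> y)
        (\<one>\<^bsub>L\<^esub> \<ominus>\<^bsub>L\<^esub> (Tpow 1 \<otimes>\<^bsub>L\<^esub> s) \<otimes>\<^bsub>L\<^esub> y')"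
      unfolding R.minus_eq using s y y'
      by (intro eq_mod_T_pow_add eq_mod_T_pow_minus) (simp_all add: R.m_assoc eq_mod_T_pow_def)
  qed (use s in simp)
  then show ?thesis using geometric_inverse s by (metis R.m_closed Tpow_closed)
qed

lemma unit_if_eq_one_mod_p:
  assumes c: "c \<in> carrier L" and "eq_mod_p_pow 1 c \<one>\<^bsub>L\<^esub>"
  shows "\<exists>w\<in>carrier L. c \<otimes>\<^bsub>L\<^esub> w = \<one>\<^bsub>L\<^esub>"
proof -
  have "eq_mod_p_pow 1 (c \<ominus>\<^bsub>L\<^esub> \<one>\<^bsub>L\<^esub>) (\<one>\<^bsub>L\<^esub> \<ominus>\<^bsub>L\<^esub> \<one>\<^bsub>L\<^esub>)"
    unfolding R.minus_eq using c assms(2)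
    by (intro eq_mod_p_pow_add eq_mod_p_pow_minus) (simp_all add: eq_mod_p_pow_def)
  then have "p_pow_dvd 1 (c \<ominus>\<^bsub>L\<^esub> \<one>\<^bsub>L\<^esub>)"
    by (simp add: eq_mod_p_pow_def p_pow_dvd_def R.minus_eq R.r_neg zero_Lambda)
  moreover have "\<one>\<^bsub>L\<^esub> \<oplus>\<^bsub>L\<^esub> (c \<ominus>\<^bsub>L\<^esub> \<one>\<^bsub>L\<^esub>) = c"
    using c by (simp add: R.minus_eq R.a_lcomm R.r_neg)
  ultimately show ?thesis using unit_one_plus_p_multiple c by (metis R.minus_closed R.one_closed)
qed

text \<open>Invert the constant coefficient modulo \<open>p\<close> in \<open>\<int>\<close>, then the constant term
  p-adically, and finally the remaining factor \<open>1 + T s\<close> T-adically.\<close>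

lemma unit_if_const_coeff_not_p_dvd:
  assumes v: "v \<in> carrier L" and v0: "v 0 1 \<noteq> 0"
  shows "\<exists>w\<in>carrier L. v \<otimes>\<^bsub>L\<^esub> w = \<one>\<^bsub>L\<^esub>"
proof -
  have "\<not> int p dvd v 0 1"
    using v0 coeff_bounds[OF v, of 0 1] by (auto dest: zdvd_imp_le)
  then obtain a where a: "(a * v 0 1) mod int p = 1"
    using inverse_mod_prime[OF prime_p] by blast
  define v' where "v' = lam_int p a \<otimes>\<^bsub>L\<^esub> v"
  have v': "v' \<in> carrier L" by (simp add: v'_def v)
  define c where "c = trunc 1 v'"
  have c: "c \<in> carrier L" by (simp add: c_def v')
  have "eq_mod_p_pow 1 c \<one>\<^bsub>L\<^esub>"
    using a p_gt_1 by (simp add: eq_mod_p_pow_def c_def trunc_def v'_def mult_lam_int v one_Lambda Tpow_def)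
  then obtain c' where c': "c' \<in> carrier L" and cc': "c \<otimes>\<^bsub>L\<^esub> c' = \<one>\<^bsub>L\<^esub>"
    using unit_if_eq_one_mod_p[OF c] by blast
  define s where "s = c' \<otimes>\<^bsub>L\<^esub> shift 1 v'"
  have s: "s \<in> carrier L" by (simp add: s_def c' v')
  have "c' \<otimes>\<^bsub>L\<^esub> v' = c' \<otimes>\<^bsub>L\<^esub> (c \<oplus>\<^bsub>L\<^esub> Tpow 1 \<otimes>\<^bsub>L\<^esub> shift 1 v')"
    using trunc_shift_decomp[OF v', of 1] by (simp add: c_def)
  also have "\<dots> = \<one>\<^bsub>L\<^esub> \<oplus>\<^bsub>L\<^esub> Tpow 1 \<otimes>\<^bsub>L\<^esub> s"
    using c c' v' cc' by (simp add: s_def R.r_distr R.m_lcomm R.m_comm)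
  finally have c'v': "c' \<otimes>\<^bsub>L\<^esub> v' = \<one>\<^bsub>L\<^esub> \<oplus>\<^bsub>L\<^esub> Tpow 1 \<otimes>\<^bsub>L\<^esub> s" .
  obtain z where z: "z \<in> carrier L" and "(\<one>\<^bsub>L\<^esub> \<oplus>\<^bsub>L\<^esub> Tpow 1 \<otimes>\<^bsub>L\<^esub> s) \<otimes>\<^bsub>L\<^esub> z = \<one>\<^bsub>L\<^esub>"
    using unit_one_plus_T_multiple[OF s] by blast
  moreover have "v \<otimes>\<^bsub>L\<^esub> (lam_int p a \<otimes>\<^bsub>L\<^esub> c' \<otimes>\<^bsub>L\<^esub> z) = (c' \<otimes>\<^bsub>L\<^esub> v') \<otimes>\<^bsub>L\<^esub> z"
    using v c' z by (simp add: v'_def R.m_ac)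
  ultimately have "v \<otimes>\<^bsub>L\<^esub> (lam_int p a \<otimes>\<^bsub>L\<^esub> c' \<otimes>\<^bsub>L\<^esub> z) = \<one>\<^bsub>L\<^esub>"
    using c'v' by simp
  then show ?thesis using c' z by (meson R.m_closed lam_int_closed)
qed

lemma p_Tpow_decomp:
  assumes f: "f \<in> carrier L" and low: "\<And>i. i < k \<Longrightarrow> f i 1 = 0"
  shows "\<exists>h\<in>carrier L. f = ppow 1 \<otimes>\<^bsub>L\<^esub> h \<oplus>\<^bsub>L\<^esub> Tpow k \<otimes>\<^bsub>L\<^esub> shift k f"
proof -
  have "p_pow_dvd 1 (trunc k f)" using low by (simp add: p_pow_dvd_def trunc_def)
  then obtain h where "h \<in> carrier L" "trunc k f = ppow 1 \<otimes>\<^bsub>L\<^esub> h"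
    using p_pow_dvd_factor[OF trunc_closed[OF f]] by blast
  then show ?thesis using trunc_shift_decomp[OF f, of k] by metis
qed

definition weierstrass_degree :: "lam \<Rightarrow> nat" where
  "weierstrass_degree f = (LEAST r. f r 1 \<noteq> 0)"

lemma weierstrass_degree:
  assumes "\<not> p_pow_dvd 1 f"
  shows "f (weierstrass_degree f) 1 \<noteq> 0" and "\<And>i. i < weierstrass_degree f \<Longrightarrow> f i 1 = 0"
proof -
  have "\<exists>r. f r 1 \<noteq> 0" using assms unfolding p_pow_dvd_def by blast
  then show "f (weierstrass_degree f) 1 \<noteq> 0" unfolding weierstrass_degree_def by (rule LeastI_ex)
  show "\<And>i. i < weierstrass_degree f \<Longrightarrow> f i 1 = 0"
    unfolding weierstrass_degree_def using not_less_Least by blast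
qed

lemma weierstrass_decomp:
  assumes f: "f \<in> carrier L" and "\<not> p_pow_dvd 1 f"
  shows "\<exists>a\<in>carrier L. \<exists>v\<in>carrier L. \<exists>w\<in>carrier L.
    f = ppow 1 \<otimes>\<^bsub>L\<^esub> a \<oplus>\<^bsub>L\<^esub> Tpow (weierstrass_degree f) \<otimes>\<^bsub>L\<^esub> v \<and> v \<otimes>\<^bsub>L\<^esub> w = \<one>\<^bsub>L\<^esub>"
proof -
  let ?r = "weierstrass_degree f"
  obtain a where "a \<in> carrier L" "f = ppow 1 \<otimes>\<^bsub>L\<^esub> a \<oplus>\<^bsub>L\<^esub> Tpow ?r \<otimes>\<^bsub>L\<^esub> shift ?r f"
    using p_Tpow_decomp[OF f weierstrass_degree(2)[OF assms(2)]] by blast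
  moreover have "shift ?r f 0 1 \<noteq> 0"
    using weierstrass_degree(1)[OF assms(2)] by (simp add: shift_def)
  then obtain w where "w \<in> carrier L" "shift ?r f \<otimes>\<^bsub>L\<^esub> w = \<one>\<^bsub>L\<^esub>"
    using unit_if_const_coeff_not_p_dvd[OF shift_closed[OF f]] by blast
  ultimately show ?thesis using shift_closed[OF f] by blast
qed

lemma distinguishedI:
  assumes P: "P \<in> carrier L" and top: "\<And>n. P r n = 1 mod int p ^ n"
    and high: "\<And>k n. r < k \<Longrightarrow> P k n = 0" and low: "\<And>k. k < r \<Longrightarrow> P k 1 = 0"
  shows "distinguished p P"
proof -
  have "p_pow_dvd 1 (trunc r P)" using low by (simp add: p_pow_dvd_def trunc_def)
  then obtain h where h: "h \<in> carrier L" and trunc: "trunc r P = ppow 1 \<otimes>\<^bsub>L\<^esub> h"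
    using p_pow_dvd_factor[OF trunc_closed[OF P]] by blast
  have "P k = (\<lambda>n. (int p * h k n) mod int p ^ n)" if "k < r" for k
  proof (intro ext)
    fix n
    have "P k n = trunc r P k n" using that by (simp add: trunc_def)
    then show "P k n = (int p * h k n) mod int p ^ n" using trunc by (simp add: mult_ppow[OF h])
  qed
  moreover have "zp p (h k)" for k using h carrier_Lambda by blast
  ultimately show ?thesis unfolding distinguished_def using P top high
    by (intro conjI exI[of _ r]) (auto simp: zp_of_int_def)
qed

lemma distinguishedE:
  assumes "distinguished p P"
  obtains r where "P \<in> carrier L" "\<And>n. P r n = 1 mod int p ^ n"
    "\<And>k n. r < k \<Longrightarrow> P k n = 0" "\<And>k. k < r \<Longrightarrow> P k 1 = 0"
proof -
  obtain d where d: "P d = zp_of_int p 1" "\<forall>k>d. P k = (\<lambda>n. 0)"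
      "\<forall>k<d. \<exists>b. zp p b \<and> P k = (\<lambda>n. (int p * b n) mod int p ^ n)"
    using assms unfolding distinguished_def by blast
  have low: "P k 1 = 0" if "k < d" for k using d(3) that by fastforce
  show thesis
    by (rule that[of d]) (use assms d low in \<open>auto simp: distinguished_def zp_of_int_def\<close>)
qed

lemma distinguished_closed: "distinguished p P \<Longrightarrow> P \<in> carrier L"
  by (simp add: distinguished_def)

lemma distinguished_Tpow: "distinguished p (Tpow r)"
  by (rule distinguishedI[where r = r]) (auto simp: Tpow_def intro: Tpow_closed[unfolded Tpow_def])

lemma distinguished_mult:
  assumes "distinguished p P" and "distinguished p Q"
  shows "distinguished p (P \<otimes>\<^bsub>L\<^esub> Q)"
proof -
  obtain r1 where P: "P \<in> carrier L" and P1: "\<And>n. P r1 n = 1 mod int p ^ n"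
    and P2: "\<And>k n. r1 < k \<Longrightarrow> P k n = 0" and P3: "\<And>k. k < r1 \<Longrightarrow> P k 1 = 0"
    by (rule distinguishedE[OF assms(1)]) blast
  obtain r2 where Q: "Q \<in> carrier L" and Q1: "\<And>n. Q r2 n = 1 mod int p ^ n"
    and Q2: "\<And>k n. r2 < k \<Longrightarrow> Q k n = 0" and Q3: "\<And>k. k < r2 \<Longrightarrow> Q k 1 = 0"
    by (rule distinguishedE[OF assms(2)]) blast
  have vanish: "P i n * Q (k - i) n = 0" if "i \<le> k" "i \<noteq> r1" "r1 + r2 \<le> k \<or> n = 1" for i k n
  proof (cases "i < r1")
    case True
    then show ?thesis using that P3 Q2[of "k - i" n] by (cases "n = 1") auto
  next
    case False
    then show ?thesis using that P2[of i n] by simp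
  qed
  show ?thesis
  proof (rule distinguishedI[where r = "r1 + r2"])
    show "P \<otimes>\<^bsub>L\<^esub> Q \<in> carrier L" using P Q by simp
    show "(P \<otimes>\<^bsub>L\<^esub> Q) (r1 + r2) n = 1 mod int p ^ n" for n
    proof -
      have "(\<Sum>i\<le>r1 + r2. P i n * Q (r1 + r2 - i) n) = P r1 n * Q r2 n"
        by (subst sum.remove[of _ r1]) (auto intro!: sum.neutral vanish)
      then show ?thesis using P1 Q1 by (simp add: mult_Lambda lam_mult_def mod_mult_eq)
    qed
    show "(P \<otimes>\<^bsub>L\<^esub> Q) k n = 0" if "r1 + r2 < k" for k n
    proof -
      have "(\<Sum>i\<le>k. P i n * Q (k - i) n) = 0"
      proof (intro sum.neutral ballI)
        fix i assume "i \<in> {..k}"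
        then show "P i n * Q (k - i) n = 0"
          using that vanish[of i k n] Q2[of "k - r1" n] by (cases "i = r1") auto
      qed
      then show ?thesis by (simp add: mult_Lambda lam_mult_def)
    qed
    show "(P \<otimes>\<^bsub>L\<^esub> Q) k 1 = 0" if "k < r1 + r2" for k
    proof -
      have "(\<Sum>i\<le>k. P i 1 * Q (k - i) 1) = 0"
      proof (intro sum.neutral ballI)
        fix i assume "i \<in> {..k}"
        then show "P i 1 * Q (k - i) 1 = 0"
          using that vanish[of i k 1] Q3[of "k - r1"] by (cases "i = r1") auto
      qed
      then show ?thesis by (simp add: mult_Lambda lam_mult_def)
    qed
  qed
qed

lemma weierstrass_division_fixpoint:
  assumes b: "b \<in> carrier L" and "p_pow_dvd 1 b"
  shows "\<exists>Y\<in>carrier L. \<ominus>\<^bsub>L\<^esub> shift r (b \<otimes>\<^bsub>L\<^esub> (\<one>\<^bsub>L\<^esub> \<oplus>\<^bsub>L\<^esub> Y)) = Y"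
proof (rule p_adic_fixpoint)
  fix n y y' assume y: "y \<in> carrier L" and y': "y' \<in> carrier L" and "eq_mod_p_pow n y y'"
  then have "eq_mod_p_pow (Suc n) (b \<otimes>\<^bsub>L\<^esub> (\<one>\<^bsub>L\<^esub> \<oplus>\<^bsub>L\<^esub> y)) (b \<otimes>\<^bsub>L\<^esub> (\<one>\<^bsub>L\<^esub> \<oplus>\<^bsub>L\<^esub> y'))"
    using b assms(2) by (intro eq_mod_p_pow_Suc_mult eq_mod_p_pow_add) (simp_all add: eq_mod_p_pow_def)
  then show "eq_mod_p_pow (Suc n) (\<ominus>\<^bsub>L\<^esub> shift r (b \<otimes>\<^bsub>L\<^esub> (\<one>\<^bsub>L\<^esub> \<oplus>\<^bsub>L\<^esub> y)))
      (\<ominus>\<^bsub>L\<^esub> shift r (b \<otimes>\<^bsub>L\<^esub> (\<one>\<^bsub>L\<^esub> \<oplus>\<^bsub>L\<^esub> y')))"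
    using b y y' by (intro eq_mod_p_pow_minus eq_mod_p_pow_shift) auto
qed (use b in simp)

text \<open>At the fixed point \<open>Y = - shift r (b (1 + Y))\<close> the terms of degree \<open>\<ge> r\<close> of
  \<open>b (1 + Y)\<close> cancel against \<open>T\<^sup>r Y\<close>, so \<open>(T\<^sup>r + b)(1 + Y)\<close> is \<open>T\<^sup>r\<close> plus a
  polynomial of degree \<open>< r\<close> divisible by \<open>p\<close>.\<close>

lemma distinguished_multiple_of_Tpow_plus_p_multiple:
  assumes b: "b \<in> carrier L" and "p_pow_dvd 1 b"
  shows "\<exists>q\<in>carrier L. distinguished p ((Tpow r \<oplus>\<^bsub>L\<^esub> b) \<otimes>\<^bsub>L\<^esub> q)"
proof -
  obtain Y where Y: "Y \<in> carrier L" and fixed: "\<ominus>\<^bsub>L\<^esub> shift r (b \<otimes>\<^bsub>L\<^esub> (\<one>\<^bsub>L\<^esub> \<oplus>\<^bsub>L\<^esub> Y)) = Y"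
    using weierstrass_division_fixpoint[OF assms] by blast
  define c where "c = b \<otimes>\<^bsub>L\<^esub> (\<one>\<^bsub>L\<^esub> \<oplus>\<^bsub>L\<^esub> Y)"
  have c: "c \<in> carrier L" using b Y by (simp add: c_def)
  have "p_pow_dvd 1 c" using b Y assms(2) by (simp add: c_def p_pow_dvd_mult)
  then have low: "c k 1 = 0" for k by (simp add: p_pow_dvd_def)
  have Y_eq: "Y = \<ominus>\<^bsub>L\<^esub> shift r c" using fixed by (simp add: c_def)
  have "(Tpow r \<oplus>\<^bsub>L\<^esub> b) \<otimes>\<^bsub>L\<^esub> (\<one>\<^bsub>L\<^esub> \<oplus>\<^bsub>L\<^esub> Y) = Tpow r \<otimes>\<^bsub>L\<^esub> (\<one>\<^bsub>L\<^esub> \<oplus>\<^bsub>L\<^esub> Y) \<oplus>\<^bsub>L\<^esub> c"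
    using b Y by (simp add: c_def R.l_distr)
  also have "Tpow r \<otimes>\<^bsub>L\<^esub> (\<one>\<^bsub>L\<^esub> \<oplus>\<^bsub>L\<^esub> Y) = Tpow r \<oplus>\<^bsub>L\<^esub> \<ominus>\<^bsub>L\<^esub> (Tpow r \<otimes>\<^bsub>L\<^esub> shift r c)"
    using c by (subst Y_eq) (simp add: R.r_distr R.r_minus)
  also have "Tpow r \<oplus>\<^bsub>L\<^esub> \<ominus>\<^bsub>L\<^esub> (Tpow r \<otimes>\<^bsub>L\<^esub> shift r c) \<oplus>\<^bsub>L\<^esub> c = Tpow r \<oplus>\<^bsub>L\<^esub> trunc r c"
  proof -
    have "x \<oplus>\<^bsub>L\<^esub> \<ominus>\<^bsub>L\<^esub> y \<oplus>\<^bsub>L\<^esub> (z \<oplus>\<^bsub>L\<^esub> y) = x \<oplus>\<^bsub>L\<^esub> z"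
      if "x \<in> carrier L" "y \<in> carrier L" "z \<in> carrier L" for x y z
      using that by algebra
    then show ?thesis
      using c trunc_shift_decomp[OF c, of r] by (metis R.m_closed Tpow_closed shift_closed trunc_closed)
  qed
  finally have prod: "(Tpow r \<oplus>\<^bsub>L\<^esub> b) \<otimes>\<^bsub>L\<^esub> (\<one>\<^bsub>L\<^esub> \<oplus>\<^bsub>L\<^esub> Y) = Tpow r \<oplus>\<^bsub>L\<^esub> trunc r c" .
  have "distinguished p (Tpow r \<oplus>\<^bsub>L\<^esub> trunc r c)"
  proof (rule distinguishedI[where r = r])
    show "Tpow r \<oplus>\<^bsub>L\<^esub> trunc r c \<in> carrier L" using c by simp
  qed (use c low in \<open>simp_all add: add_Lambda lam_add_def Tpow_def trunc_def\<close>)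
  then show ?thesis using prod Y by (metis R.add.m_closed R.one_closed)
qed

lemma weierstrass_preparation:
  assumes u: "u \<in> carrier L" and "\<not> p_pow_dvd 1 u"
  shows "\<exists>q\<in>carrier L. distinguished p (u \<otimes>\<^bsub>L\<^esub> q)"
proof -
  obtain r a v w where a: "a \<in> carrier L" and v: "v \<in> carrier L" and w: "w \<in> carrier L"
    and u_eq: "u = ppow 1 \<otimes>\<^bsub>L\<^esub> a \<oplus>\<^bsub>L\<^esub> Tpow r \<otimes>\<^bsub>L\<^esub> v" and vw: "v \<otimes>\<^bsub>L\<^esub> w = \<one>\<^bsub>L\<^esub>"
    using weierstrass_decomp[OF assms] by blast
  define b where "b = ppow 1 \<otimes>\<^bsub>L\<^esub> (a \<otimes>\<^bsub>L\<^esub> w)"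
  have b: "b \<in> carrier L" using a w by (simp add: b_def)
  have "v \<otimes>\<^bsub>L\<^esub> b = ppow 1 \<otimes>\<^bsub>L\<^esub> a \<otimes>\<^bsub>L\<^esub> (v \<otimes>\<^bsub>L\<^esub> w)"
    using a v w by (simp add: b_def R.m_ac)
  then have u_fact: "u = v \<otimes>\<^bsub>L\<^esub> (Tpow r \<oplus>\<^bsub>L\<^esub> b)"
    using u_eq vw a v b by (simp add: R.r_distr R.m_comm R.a_comm)
  obtain q where q: "q \<in> carrier L" and dist: "distinguished p ((Tpow r \<oplus>\<^bsub>L\<^esub> b) \<otimes>\<^bsub>L\<^esub> q)"
    using distinguished_multiple_of_Tpow_plus_p_multiple[OF b] a w p_pow_dvd_ppow_mult
    unfolding b_def by blast
  have "u \<otimes>\<^bsub>L\<^esub> (w \<otimes>\<^bsub>L\<^esub> q) = (v \<otimes>\<^bsub>L\<^esub> w) \<otimes>\<^bsub>L\<^esub> ((Tpow r \<oplus>\<^bsub>L\<^esub> b) \<otimes>\<^bsub>L\<^esub> q)"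
    unfolding u_fact using v w q b by (simp add: R.m_ac)
  then show ?thesis using dist vw w q distinguished_closed by (metis R.l_one R.m_closed)
qed

lemma p_power_factorization:
  assumes g: "g \<in> carrier L" and "\<not> p_pow_dvd l g"
  shows "\<exists>m<l. \<exists>u\<in>carrier L. \<not> p_pow_dvd 1 u \<and> g = ppow m \<otimes>\<^bsub>L\<^esub> u"
proof -
  obtain m where "m < l" and m: "p_pow_dvd m g" and not_Suc: "\<not> p_pow_dvd (Suc m) g"
    using ex_least_nat_less[of "\<lambda>m. \<not> p_pow_dvd m g" l] assms by auto
  obtain u where u: "u \<in> carrier L" and g_eq: "g = ppow m \<otimes>\<^bsub>L\<^esub> u"
    using p_pow_dvd_factor[OF g m] by blast
  have "\<not> p_pow_dvd 1 u"
  proof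
    assume "p_pow_dvd 1 u"
    then obtain u' where u': "u' \<in> carrier L" and "u = ppow 1 \<otimes>\<^bsub>L\<^esub> u'"
      using p_pow_dvd_factor[OF u] by blast
    then have "g = ppow (Suc m) \<otimes>\<^bsub>L\<^esub> u'"
      using g_eq by (simp add: R.m_assoc[symmetric] ppow_add)
    then show False using not_Suc p_pow_dvd_ppow_mult[OF u'] by metis
  qed
  then show ?thesis using \<open>m < l\<close> u g_eq by blast
qed

lemma p_power_factorization_nonzero:
  assumes g: "g \<in> carrier L" and "g \<noteq> \<zero>\<^bsub>L\<^esub>"
  shows "\<exists>m. \<exists>u\<in>carrier L. \<not> p_pow_dvd 1 u \<and> g = ppow m \<otimes>\<^bsub>L\<^esub> u"
proof -
  obtain i n where "g i n \<noteq> 0" using assms(2) unfolding zero_Lambda by (meson ext)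
  then have "\<not> p_pow_dvd n g" by (auto simp: p_pow_dvd_def)
  then show ?thesis using p_power_factorization[OF g] by blast
qed

lemma Tpow_weierstrass_degree_in_ideal:
  assumes I: "I \<subseteq> carrier L" and p: "ppow 1 \<in> I"
    and add: "\<And>f g. f \<in> I \<Longrightarrow> g \<in> I \<Longrightarrow> f \<oplus>\<^bsub>L\<^esub> g \<in> I"
    and mult: "\<And>h f. h \<in> carrier L \<Longrightarrow> f \<in> I \<Longrightarrow> h \<otimes>\<^bsub>L\<^esub> f \<in> I"
    and f: "f \<in> I" "\<not> p_pow_dvd 1 f"
  shows "Tpow (weierstrass_degree f) \<in> I"
proof -
  let ?r = "weierstrass_degree f"
  obtain a v w where a: "a \<in> carrier L" and v: "v \<in> carrier L" and w: "w \<in> carrier L"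
    and f_eq: "f = ppow 1 \<otimes>\<^bsub>L\<^esub> a \<oplus>\<^bsub>L\<^esub> Tpow ?r \<otimes>\<^bsub>L\<^esub> v" and vw: "v \<otimes>\<^bsub>L\<^esub> w = \<one>\<^bsub>L\<^esub>"
    using weierstrass_decomp[of f] f I by blast
  have "f \<oplus>\<^bsub>L\<^esub> (\<ominus>\<^bsub>L\<^esub> a) \<otimes>\<^bsub>L\<^esub> ppow 1 = Tpow ?r \<otimes>\<^bsub>L\<^esub> v"
    using a v ppow_closed[of 1] Tpow_closed[of ?r] by (subst f_eq) algebra
  then have "w \<otimes>\<^bsub>L\<^esub> (f \<oplus>\<^bsub>L\<^esub> (\<ominus>\<^bsub>L\<^esub> a) \<otimes>\<^bsub>L\<^esub> ppow 1) = (v \<otimes>\<^bsub>L\<^esub> w) \<otimes>\<^bsub>L\<^esub> Tpow ?r"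
    using v w by (simp add: R.m_ac)
  moreover have "w \<otimes>\<^bsub>L\<^esub> (f \<oplus>\<^bsub>L\<^esub> (\<ominus>\<^bsub>L\<^esub> a) \<otimes>\<^bsub>L\<^esub> ppow 1) \<in> I"
    using f a p w by (intro add mult) auto
  ultimately show ?thesis using vw by simp
qed

text \<open>\<open>\<Lambda>/p\<close> is the discrete valuation ring \<open>\<bbbF>\<^sub>p[[T]]\<close>: modulo \<open>p\<close>, an ideal containing \<open>p\<close>
  is generated by a single element (a power of \<open>T\<close>, or \<open>p\<close> itself).\<close>

lemma ideal_containing_p_principal_mod_p:
  assumes I: "I \<subseteq> carrier L" and p: "ppow 1 \<in> I"
    and add: "\<And>f g. f \<in> I \<Longrightarrow> g \<in> I \<Longrightarrow> f \<oplus>\<^bsub>L\<^esub> g \<in> I"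
    and mult: "\<And>h f. h \<in> carrier L \<Longrightarrow> f \<in> I \<Longrightarrow> h \<otimes>\<^bsub>L\<^esub> f \<in> I"
  shows "\<exists>e\<in>I. \<forall>f\<in>I. \<exists>h\<in>carrier L. \<exists>c\<in>carrier L. f = ppow 1 \<otimes>\<^bsub>L\<^esub> h \<oplus>\<^bsub>L\<^esub> c \<otimes>\<^bsub>L\<^esub> e"
proof (cases "\<forall>f\<in>I. p_pow_dvd 1 f")
  case True
  have "\<exists>h\<in>carrier L. \<exists>c\<in>carrier L. f = ppow 1 \<otimes>\<^bsub>L\<^esub> h \<oplus>\<^bsub>L\<^esub> c \<otimes>\<^bsub>L\<^esub> ppow 1" if f: "f \<in> I" for f
  proof -
    obtain h where "h \<in> carrier L" "f = ppow 1 \<otimes>\<^bsub>L\<^esub> h"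
      using True f p_pow_dvd_factor[OF subsetD[OF I f]] by blast
    then show ?thesis by (intro bexI[of _ h] bexI[of _ "\<zero>\<^bsub>L\<^esub>"]) auto
  qed
  then show ?thesis using p by blast
next
  case False
  define k where "k = (LEAST k. \<exists>f\<in>I. \<not> p_pow_dvd 1 f \<and> weierstrass_degree f = k)"
  obtain f0 where f0: "f0 \<in> I" "\<not> p_pow_dvd 1 f0" "weierstrass_degree f0 = k"
    using False LeastI_ex[of "\<lambda>k. \<exists>f\<in>I. \<not> p_pow_dvd 1 f \<and> weierstrass_degree f = k"]
    unfolding k_def by blast
  have "\<exists>h\<in>carrier L. \<exists>c\<in>carrier L. f = ppow 1 \<otimes>\<^bsub>L\<^esub> h \<oplus>\<^bsub>L\<^esub> c \<otimes>\<^bsub>L\<^esub> Tpow k" if f: "f \<in> I" for f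
  proof -
    have "f i 1 = 0" if "i < k" for i
    proof (cases "p_pow_dvd 1 f")
      case False
      then have "k \<le> weierstrass_degree f" unfolding k_def using f by (blast intro: Least_le)
      then show ?thesis using weierstrass_degree(2)[OF False] that by simp
    qed (simp add: p_pow_dvd_def)
    then obtain h where "h \<in> carrier L" "f = ppow 1 \<otimes>\<^bsub>L\<^esub> h \<oplus>\<^bsub>L\<^esub> Tpow k \<otimes>\<^bsub>L\<^esub> shift k f"
      using p_Tpow_decomp subsetD[OF I f] by blast
    then show ?thesis using subsetD[OF I f] by (metis R.m_comm Tpow_closed shift_closed)
  qed
  moreover have "Tpow k \<in> I"
    using Tpow_weierstrass_degree_in_ideal[OF assms f0(1,2)] f0(3) by simp
  ultimately show ?thesis by blast
qed

end

section \<open>Modules over \<open>\<Lambda>\<close>\<close>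

locale iwasawa_module = iwasawa_algebra p + M: module "Lambda p" A
  for p :: nat and A :: "(lam, 'a, 'm) module_scheme"
begin

abbreviation smult_A :: "lam \<Rightarrow> 'a \<Rightarrow> 'a" (infixr "\<cdot>" 75) where
  "g \<cdot> x \<equiv> g \<odot>\<^bsub>A\<^esub> x"

abbreviation submod :: "'a set \<Rightarrow> bool" where
  "submod H \<equiv> scal_submod A (carrier L) H"

abbreviation span :: "'a set \<Rightarrow> 'a set" where
  "span S \<equiv> gen_submod A (carrier L) S"

lemma smult_assoc:
  "g \<in> carrier L \<Longrightarrow> h \<in> carrier L \<Longrightarrow> x \<in> carrier A \<Longrightarrow> (g \<otimes>\<^bsub>L\<^esub> h) \<cdot> x = g \<cdot> (h \<cdot> x)"
  by (rule M.smult_assoc1)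

lemma smult_comm:
  "g \<in> carrier L \<Longrightarrow> h \<in> carrier L \<Longrightarrow> x \<in> carrier A \<Longrightarrow> g \<cdot> (h \<cdot> x) = h \<cdot> (g \<cdot> x)"
  by (metis M.smult_assoc1 R.m_comm)

lemma smult_diff:
  "g \<in> carrier L \<Longrightarrow> x \<in> carrier A \<Longrightarrow> y \<in> carrier A \<Longrightarrow>
   g \<cdot> (x \<ominus>\<^bsub>A\<^esub> y) = g \<cdot> x \<ominus>\<^bsub>A\<^esub> g \<cdot> y"
  by (simp add: M.M.minus_eq M.smult_r_distr M.smult_r_minus)

lemma add_diff_cancel_left_A: "x \<in> carrier A \<Longrightarrow> y \<in> carrier A \<Longrightarrow> x \<oplus>\<^bsub>A\<^esub> y \<ominus>\<^bsub>A\<^esub> x = y"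
  by (simp add: M.M.minus_eq M.M.a_comm[of x y] M.M.a_assoc M.M.r_neg)

lemma ppow_smult_ppow: "x \<in> carrier A \<Longrightarrow> ppow a \<cdot> (ppow b \<cdot> x) = ppow (a + b) \<cdot> x"
  by (simp add: smult_assoc[symmetric] ppow_add)

lemma Tpow_smult_Tpow: "x \<in> carrier A \<Longrightarrow> Tpow a \<cdot> (Tpow b \<cdot> x) = Tpow (a + b) \<cdot> x"
  by (simp add: smult_assoc[symmetric] Tpow_add)

lemma Tpow_0_smult [simp]: "x \<in> carrier A \<Longrightarrow> Tpow 0 \<cdot> x = x"
  by (simp add: one_Lambda[symmetric])

lemma Mtors_iff: "x \<in> Mtors p A \<longleftrightarrow> x \<in> carrier A \<and> (\<exists>k. ppow k \<cdot> x = \<zero>\<^bsub>A\<^esub>)"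
  by (simp add: Mtors_def ppow_def)

lemma Mtors_smult:
  assumes "x \<in> Mtors p A" "g \<in> carrier L"
  shows "g \<cdot> x \<in> Mtors p A"
proof -
  obtain k where "x \<in> carrier A" "ppow k \<cdot> x = \<zero>\<^bsub>A\<^esub>" using assms(1) by (auto simp: Mtors_iff)
  then have "ppow k \<cdot> (g \<cdot> x) = \<zero>\<^bsub>A\<^esub>" using assms(2) smult_comm[of "ppow k" g x] by simp
  then show ?thesis using assms \<open>x \<in> carrier A\<close> by (auto simp: Mtors_iff)
qed

definition ord_exp :: "'a \<Rightarrow> nat" where
  "ord_exp x = (LEAST k. ppow k \<cdot> x = \<zero>\<^bsub>A\<^esub>)"

lemma ord_p_eq: "ord_p p A x = p ^ ord_exp x"
  by (simp add: ord_p_def ord_exp_def ppow_def)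

lemma ord_exp_kills:
  assumes "x \<in> Mtors p A"
  shows "ppow (ord_exp x) \<cdot> x = \<zero>\<^bsub>A\<^esub>"
proof -
  have "\<exists>k. ppow k \<cdot> x = \<zero>\<^bsub>A\<^esub>" using assms by (simp add: Mtors_iff)
  then show ?thesis unfolding ord_exp_def by (rule LeastI_ex)
qed

lemma ord_exp_le: "ppow k \<cdot> x = \<zero>\<^bsub>A\<^esub> \<Longrightarrow> ord_exp x \<le> k"
  unfolding ord_exp_def by (rule Least_le)

lemma ord_exp_smult_le:
  assumes "x \<in> Mtors p A" "g \<in> carrier L"
  shows "ord_exp (g \<cdot> x) \<le> ord_exp x"
proof -
  have "ppow (ord_exp x) \<cdot> (g \<cdot> x) = \<zero>\<^bsub>A\<^esub>"
    using assms ord_exp_kills smult_comm[of "ppow (ord_exp x)" g x] by (simp add: Mtors_iff)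
  then show ?thesis by (rule ord_exp_le)
qed

text \<open>The eventual value of \<open>ord_exp (T\<^sup>j x)\<close> is its minimum over all \<open>j\<close>, which is attained
  for all large \<open>j\<close> since \<open>ord_exp (T\<^sup>j x)\<close> is non-increasing in \<open>j\<close>.\<close>

definition ess_exp :: "'a \<Rightarrow> nat" where
  "ess_exp x = (LEAST e. \<exists>j. ord_exp (Tpow j \<cdot> x) = e)"

lemma ess_exp_le: "ess_exp x \<le> ord_exp (Tpow j \<cdot> x)"
  unfolding ess_exp_def by (rule Least_le) blast

lemma ess_exp_eventually:
  assumes x: "x \<in> Mtors p A"
  shows "\<exists>J. \<forall>j\<ge>J. ord_exp (Tpow j \<cdot> x) = ess_exp x"
proof -
  have "\<exists>J. ord_exp (Tpow J \<cdot> x) = ess_exp x"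
    unfolding ess_exp_def by (rule LeastI_ex) blast
  then obtain J where J: "ord_exp (Tpow J \<cdot> x) = ess_exp x" ..
  have "ord_exp (Tpow j \<cdot> x) = ess_exp x" if "J \<le> j" for j
  proof -
    have "Tpow j \<cdot> x = Tpow (j - J) \<cdot> (Tpow J \<cdot> x)"
      using that x by (simp add: Tpow_smult_Tpow Mtors_iff)
    then have "ord_exp (Tpow j \<cdot> x) \<le> ord_exp (Tpow J \<cdot> x)"
      using ord_exp_smult_le[OF Mtors_smult[OF x Tpow_closed]] by simp
    then show ?thesis using J ess_exp_le[of x j] by simp
  qed
  then show ?thesis by blast
qed

lemma ess_ord_eq:
  assumes "x \<in> Mtors p A"
  shows "ess_ord p A x = p ^ ess_exp x"
proof -
  obtain J where J_eq: "\<forall>j\<ge>J. ord_exp (Tpow j \<cdot> x) = ess_exp x"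
    using ess_exp_eventually[OF assms] by blast
  show ?thesis
    unfolding ess_ord_def lam_T_pow ord_p_eq
  proof (rule the_equality)
    show "\<exists>J. \<forall>j\<ge>J. p ^ ord_exp (Tpow j \<cdot> x) = p ^ ess_exp x"
      using J_eq by (intro exI[of _ J]) simp
    fix e assume "\<exists>J'. \<forall>j\<ge>J'. p ^ ord_exp (Tpow j \<cdot> x) = e"
    then obtain J' where "\<forall>j\<ge>J'. p ^ ord_exp (Tpow j \<cdot> x) = e" by blast
    then have "p ^ ord_exp (Tpow (max J J') \<cdot> x) = e" by simp
    then show "e = p ^ ess_exp x" using J_eq by simp
  qed
qed

lemma submodD:
  assumes "submod H"
  shows "H \<subseteq> carrier A" "\<zero>\<^bsub>A\<^esub> \<in> H" "\<And>x y. x \<in> H \<Longrightarrow> y \<in> H \<Longrightarrow> x \<oplus>\<^bsub>A\<^esub> y \<in> H"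
    "\<And>g x. g \<in> carrier L \<Longrightarrow> x \<in> H \<Longrightarrow> g \<cdot> x \<in> H"
  using assms unfolding scal_submod_def by auto

lemma submod_diff:
  assumes H: "submod H" and "x \<in> H" "y \<in> H"
  shows "x \<ominus>\<^bsub>A\<^esub> y \<in> H"
proof -
  have "\<ominus>\<^bsub>A\<^esub> y = (\<ominus>\<^bsub>L\<^esub> \<one>\<^bsub>L\<^esub>) \<cdot> y"
    using assms submodD(1)[OF H] by (auto simp: M.smult_l_minus)
  then show ?thesis using assms submodD[OF H] by (simp add: M.M.minus_eq)
qed

lemma submod_carrier: "submod (carrier A)"
  unfolding scal_submod_def by auto

lemma submod_zero: "submod {\<zero>\<^bsub>A\<^esub>}"
  unfolding scal_submod_def by auto

lemma submod_preimage:
  assumes X: "submod X" and g: "g \<in> carrier L"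
  shows "submod {z \<in> carrier A. g \<cdot> z \<in> X}"
  unfolding scal_submod_def
  using submodD[OF X] g by (auto simp: M.smult_r_distr smult_comm[of g])

lemma span_minimal: "submod H \<Longrightarrow> S \<subseteq> H \<Longrightarrow> span S \<subseteq> H"
  unfolding gen_submod_def by blast

lemma span_superset: "S \<subseteq> span S"
  unfolding gen_submod_def by blast

lemma span_submod:
  assumes "S \<subseteq> carrier A"
  shows "submod (span S)"
proof -
  have top: "carrier A \<in> {H. submod H \<and> S \<subseteq> H}" using submod_carrier assms by blast
  show ?thesis unfolding scal_submod_def
  proof (intro conjI ballI)
    show "span S \<subseteq> carrier A" unfolding gen_submod_def using top by blast
    show "\<zero>\<^bsub>A\<^esub> \<in> span S" unfolding gen_submod_def scal_submod_def by blast
    show "x \<oplus>\<^bsub>A\<^esub> y \<in> span S" if "x \<in> span S" "y \<in> span S" for x y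
      using that unfolding gen_submod_def scal_submod_def by blast
    show "g \<cdot> x \<in> span S" if "g \<in> carrier L" "x \<in> span S" for g x
      using that unfolding gen_submod_def scal_submod_def by blast
  qed
qed

lemma span_subset_carrier: "S \<subseteq> carrier A \<Longrightarrow> span S \<subseteq> carrier A"
  using span_submod submodD(1) by blast

lemma span_mono: "S \<subseteq> T \<Longrightarrow> T \<subseteq> carrier A \<Longrightarrow> span S \<subseteq> span T"
  by (meson span_minimal span_submod span_superset order_trans)

lemma span_insert:
  assumes S: "S \<subseteq> carrier A" and s: "s \<in> carrier A"
  shows "span (insert s S) = {f \<cdot> s \<oplus>\<^bsub>A\<^esub> z | f z. f \<in> carrier L \<and> z \<in> span S}"
    (is "_ = ?R")
proof
  have spS: "submod (span S)" using span_submod[OF S] .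
  note spS' = submodD[OF spS]
  have "submod ?R" unfolding scal_submod_def
  proof (intro conjI ballI)
    show "?R \<subseteq> carrier A" using spS' s by auto
    have "\<zero>\<^bsub>A\<^esub> = \<zero>\<^bsub>L\<^esub> \<cdot> s \<oplus>\<^bsub>A\<^esub> \<zero>\<^bsub>A\<^esub>" using s by simp
    then show "\<zero>\<^bsub>A\<^esub> \<in> ?R" using spS' by blast
  next
    fix x y assume "x \<in> ?R" "y \<in> ?R"
    then obtain f1 z1 f2 z2 where x: "x = f1 \<cdot> s \<oplus>\<^bsub>A\<^esub> z1" "f1 \<in> carrier L" "z1 \<in> span S"
      and y: "y = f2 \<cdot> s \<oplus>\<^bsub>A\<^esub> z2" "f2 \<in> carrier L" "z2 \<in> span S" by blast
    moreover have "z1 \<in> carrier A" "z2 \<in> carrier A" using x y spS' by auto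
    ultimately have "x \<oplus>\<^bsub>A\<^esub> y = (f1 \<oplus>\<^bsub>L\<^esub> f2) \<cdot> s \<oplus>\<^bsub>A\<^esub> (z1 \<oplus>\<^bsub>A\<^esub> z2)"
      using s by (simp add: M.smult_l_distr M.M.a_ac)
    then show "x \<oplus>\<^bsub>A\<^esub> y \<in> ?R" using x y spS' by blast
  next
    fix g x assume g: "g \<in> carrier L" and "x \<in> ?R"
    then obtain f z where x: "x = f \<cdot> s \<oplus>\<^bsub>A\<^esub> z" "f \<in> carrier L" "z \<in> span S" by blast
    moreover have "z \<in> carrier A" using x spS' by auto
    ultimately have "g \<cdot> x = (g \<otimes>\<^bsub>L\<^esub> f) \<cdot> s \<oplus>\<^bsub>A\<^esub> g \<cdot> z"
      using g s by (simp add: M.smult_r_distr smult_assoc)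
    then show "g \<cdot> x \<in> ?R" using x g spS' by blast
  qed
  moreover have "insert s S \<subseteq> ?R"
  proof
    fix t assume "t \<in> insert s S"
    then consider "t = s" | "t \<in> S" by blast
    then show "t \<in> ?R"
    proof cases
      case 1
      then have "t = \<one>\<^bsub>L\<^esub> \<cdot> s \<oplus>\<^bsub>A\<^esub> \<zero>\<^bsub>A\<^esub>" using s by simp
      then show ?thesis using spS' by blast
    next
      case 2
      then have "t = \<zero>\<^bsub>L\<^esub> \<cdot> s \<oplus>\<^bsub>A\<^esub> t" using s S by auto
      then show ?thesis using span_superset 2 by blast
    qed
  qed
  ultimately show "span (insert s S) \<subseteq> ?R" by (rule span_minimal)
next
  have sp: "submod (span (insert s S))" using span_submod S s by simp
  have "span S \<subseteq> span (insert s S)" using span_mono[of S "insert s S"] S s by auto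
  moreover have "s \<in> span (insert s S)" using span_superset by blast
  ultimately show "?R \<subseteq> span (insert s S)" using submodD(3,4)[OF sp] by blast
qed

lemma smult_span_image:
  assumes "S \<subseteq> carrier A" "g \<in> carrier L" "a \<in> span S"
  shows "g \<cdot> a \<in> span ((\<lambda>s. g \<cdot> s) ` S)"
proof -
  have "S \<subseteq> {z \<in> carrier A. g \<cdot> z \<in> span ((\<lambda>s. g \<cdot> s) ` S)}"
    using assms span_superset by blast
  then have "span S \<subseteq> {z \<in> carrier A. g \<cdot> z \<in> span ((\<lambda>s. g \<cdot> s) ` S)}"
    using assms by (intro span_minimal submod_preimage span_submod) auto
  then show ?thesis using assms(3) by blast
qed

lemma span_annihilated:
  assumes "S \<subseteq> carrier A" "g \<in> carrier L" "\<forall>s\<in>S. g \<cdot> s = \<zero>\<^bsub>A\<^esub>" "a \<in> span S"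
  shows "g \<cdot> a = \<zero>\<^bsub>A\<^esub>"
proof -
  have "span S \<subseteq> {z \<in> carrier A. g \<cdot> z \<in> {\<zero>\<^bsub>A\<^esub>}}"
    using assms by (intro span_minimal submod_preimage submod_zero) auto
  then show ?thesis using assms(4) by blast
qed

section \<open>Annihilators of torsion elements and decomposable elements\<close>

lemma Tpow_weierstrass_degree_annihilates:
  assumes y: "y \<in> carrier A" and py: "ppow 1 \<cdot> y = \<zero>\<^bsub>A\<^esub>"
    and u: "u \<in> carrier L" "\<not> p_pow_dvd 1 u" and uy: "u \<cdot> y = \<zero>\<^bsub>A\<^esub>"
  shows "Tpow (weierstrass_degree u) \<cdot> y = \<zero>\<^bsub>A\<^esub>"
proof -
  define r where "r = weierstrass_degree u"
  obtain a v w where a: "a \<in> carrier L" and v: "v \<in> carrier L" and w: "w \<in> carrier L"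
    and u_eq: "u = ppow 1 \<otimes>\<^bsub>L\<^esub> a \<oplus>\<^bsub>L\<^esub> Tpow r \<otimes>\<^bsub>L\<^esub> v" and vw: "v \<otimes>\<^bsub>L\<^esub> w = \<one>\<^bsub>L\<^esub>"
    using weierstrass_decomp[OF u] unfolding r_def[symmetric] by blast
  have "u \<cdot> y = a \<cdot> (ppow 1 \<cdot> y) \<oplus>\<^bsub>A\<^esub> Tpow r \<cdot> (v \<cdot> y)"
    using a v y by (simp add: u_eq M.smult_l_distr smult_assoc smult_comm[OF ppow_closed a y])
  then have "Tpow r \<cdot> (v \<cdot> y) = \<zero>\<^bsub>A\<^esub>"
    unfolding py uy using a v y by simp
  moreover have "Tpow r \<cdot> y = ((v \<otimes>\<^bsub>L\<^esub> w) \<otimes>\<^bsub>L\<^esub> Tpow r) \<cdot> y"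
    using vw y by simp
  then have "Tpow r \<cdot> y = w \<cdot> (Tpow r \<cdot> (v \<cdot> y))"
    using v w y by (simp add: smult_assoc[symmetric] R.m_ac)
  ultimately show ?thesis using w by (simp add: r_def)
qed

lemma annihilator_divisible_by_ess_ord:
  assumes x: "x \<in> Mtors p A" and pos: "0 < ess_exp x"
    and g: "g \<in> carrier L" and gx: "g \<cdot> x = \<zero>\<^bsub>A\<^esub>"
  shows "\<exists>h\<in>carrier L. g = ppow (ess_exp x) \<otimes>\<^bsub>L\<^esub> h"
proof (rule ccontr)
  let ?l = "ess_exp x"
  assume "\<not> ?thesis"
  then have "\<not> p_pow_dvd ?l g" using p_pow_dvd_factor[OF g] by blast
  then obtain m u where "m < ?l" and u: "u \<in> carrier L" "\<not> p_pow_dvd 1 u"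
    and g_eq: "g = ppow m \<otimes>\<^bsub>L\<^esub> u"
    using p_power_factorization[OF g] by blast
  obtain J where J: "\<And>j. J \<le> j \<Longrightarrow> ord_exp (Tpow j \<cdot> x) = ?l"
    using ess_exp_eventually[OF x] by blast
  have xA: "x \<in> carrier A" using x by (simp add: Mtors_iff)
  define y where "y = ppow (?l - 1) \<cdot> (Tpow J \<cdot> x)"
  have y: "y \<in> carrier A" using xA by (simp add: y_def)
  have "ppow 1 \<cdot> y = ppow ?l \<cdot> (Tpow J \<cdot> x)"
    using xA pos by (simp add: y_def ppow_smult_ppow)
  also have "\<dots> = \<zero>\<^bsub>A\<^esub>"
    using ord_exp_kills[OF Mtors_smult[OF x Tpow_closed, of J]] J[of J] by simp
  finally have py: "ppow 1 \<cdot> y = \<zero>\<^bsub>A\<^esub>" .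
  have "ppow (?l - 1) = ppow (?l - 1 - m) \<otimes>\<^bsub>L\<^esub> ppow m"
    using \<open>m < ?l\<close> by (simp add: ppow_add)
  then have "u \<otimes>\<^bsub>L\<^esub> (ppow (?l - 1) \<otimes>\<^bsub>L\<^esub> Tpow J) = (ppow (?l - 1 - m) \<otimes>\<^bsub>L\<^esub> Tpow J) \<otimes>\<^bsub>L\<^esub> g"
    using u by (simp add: g_eq R.m_ac)
  then have "u \<cdot> y = (ppow (?l - 1 - m) \<otimes>\<^bsub>L\<^esub> Tpow J) \<cdot> (g \<cdot> x)"
    using u g xA by (simp add: y_def smult_assoc[symmetric])
  then have uy: "u \<cdot> y = \<zero>\<^bsub>A\<^esub>" using gx by simp
  let ?r = "weierstrass_degree u"
  have "Tpow ?r \<cdot> y = ppow (?l - 1) \<cdot> (Tpow (?r + J) \<cdot> x)"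
    using xA by (simp add: y_def smult_assoc[symmetric] Tpow_add[symmetric] R.m_ac)
  then have "ppow (?l - 1) \<cdot> (Tpow (?r + J) \<cdot> x) = \<zero>\<^bsub>A\<^esub>"
    using Tpow_weierstrass_degree_annihilates[OF y py u uy] by simp
  then have "ord_exp (Tpow (?r + J) \<cdot> x) \<le> ?l - 1" by (rule ord_exp_le)
  then show False using J[of "?r + J"] pos by simp
qed

lemma Dpart_if_p_smult_eq:
  assumes x: "x \<in> carrier A" and y: "y \<in> Lpart p A" and z: "z \<in> Mtors p A"
    and eq: "ppow 1 \<cdot> x = ppow 1 \<cdot> y \<oplus>\<^bsub>A\<^esub> z"
  shows "x \<in> Dpart p A"
proof -
  have yA: "y \<in> carrier A" and zA: "z \<in> carrier A" using y z by (auto simp: Lpart_def Mtors_iff)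
  have "ppow 1 \<cdot> (x \<ominus>\<^bsub>A\<^esub> y) = ppow 1 \<cdot> x \<oplus>\<^bsub>A\<^esub> \<ominus>\<^bsub>A\<^esub> (ppow 1 \<cdot> y)"
    using smult_diff[OF ppow_closed x yA] by (simp add: M.M.minus_eq)
  also have "\<dots> = z"
    unfolding eq using yA zA by (simp add: M.M.a_comm[of _ z] M.M.a_assoc M.M.r_neg)
  finally have diff_eq: "ppow 1 \<cdot> (x \<ominus>\<^bsub>A\<^esub> y) = z" .
  obtain k where k: "ppow k \<cdot> z = \<zero>\<^bsub>A\<^esub>" using z by (auto simp: Mtors_iff)
  have "ppow (k + 1) \<cdot> (x \<ominus>\<^bsub>A\<^esub> y) = ppow k \<cdot> (ppow 1 \<cdot> (x \<ominus>\<^bsub>A\<^esub> y))"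
    using x yA by (simp only: ppow_smult_ppow M.M.minus_closed)
  then have "ppow (k + 1) \<cdot> (x \<ominus>\<^bsub>A\<^esub> y) = \<zero>\<^bsub>A\<^esub>"
    unfolding diff_eq k .
  then have "x \<ominus>\<^bsub>A\<^esub> y \<in> Mtors p A" using x yA Mtors_iff by blast
  moreover have "x = y \<oplus>\<^bsub>A\<^esub> (x \<ominus>\<^bsub>A\<^esub> y)"
    using x yA by (simp add: M.M.minus_eq M.M.a_ac M.M.r_neg M.M.r_neg1 M.M.r_neg2)
  ultimately show ?thesis using y by (auto simp: Dpart_def)
qed

text \<open>\<open>delta p A x\<close> is a \<open>LEAST\<close> over a set that might be empty; the junk value \<open>0\<close>
  is excluded because \<open>x \<notin> D(A)\<close>.\<close>

lemma delta_part_not_p_divisible: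
  assumes x: "x \<in> carrier A - Dpart p A" and c: "c \<in> Lpart p A" and z: "z \<in> Mtors p A"
    and eq: "ppow (delta p A x) \<cdot> x = c \<oplus>\<^bsub>A\<^esub> z"
  shows "c \<notin> {ppow 1 \<cdot> y | y. y \<in> Lpart p A}"
proof
  assume "c \<in> {ppow 1 \<cdot> y | y. y \<in> Lpart p A}"
  then obtain y where y: "y \<in> Lpart p A" and c_eq: "c = ppow 1 \<cdot> y" by auto
  have xA: "x \<in> carrier A" using x by simp
  define d where "d = delta p A x"
  have "d \<noteq> 0"
  proof
    assume "d = 0"
    then have "x = c \<oplus>\<^bsub>A\<^esub> z" using eq xA by (simp add: d_def)
    then show False using x c z by (auto simp: Dpart_def)
  qed
  then have "ppow 1 \<cdot> (ppow (d - 1) \<cdot> x) = ppow 1 \<cdot> y \<oplus>\<^bsub>A\<^esub> z"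
    using xA eq by (simp add: ppow_smult_ppow d_def c_eq)
  then have D: "ppow (d - 1) \<cdot> x \<in> Dpart p A"
    using xA y z by (intro Dpart_if_p_smult_eq) simp_all
  show False
  proof (cases "d = 1")
    case True
    then show False using D x xA by simp
  next
    case False
    have "\<not> (0 < d - 1 \<and> lam_int p (int p ^ (d - 1)) \<cdot> x \<in> Dpart p A)"
      using \<open>d \<noteq> 0\<close> unfolding d_def delta_def by (intro not_less_Least) simp
    then show False using False \<open>d \<noteq> 0\<close> D by (simp add: ppow_def)
  qed
qed

section \<open>Bounded T-power torsion\<close>

definition T_torsion_bounded :: "'a set \<Rightarrow> 'a set \<Rightarrow> nat \<Rightarrow> bool" where
  "T_torsion_bounded X Z N \<longleftrightarrow> (\<forall>z\<in>Z. \<forall>j. Tpow j \<cdot> z \<in> X \<longrightarrow> Tpow N \<cdot> z \<in> X)"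

definition T_torsion_ideal :: "'a set \<Rightarrow> 'a set \<Rightarrow> 'a \<Rightarrow> lam set" where
  "T_torsion_ideal X S s = {f \<in> carrier L. \<exists>z\<in>span S. \<exists>j. Tpow j \<cdot> (f \<cdot> s \<oplus>\<^bsub>A\<^esub> z) \<in> X}"

lemma T_torsion_ideal_mult:
  assumes X: "submod X" and S: "S \<subseteq> carrier A" and s: "s \<in> carrier A"
    and h: "h \<in> carrier L" and f: "f \<in> T_torsion_ideal X S s"
  shows "h \<otimes>\<^bsub>L\<^esub> f \<in> T_torsion_ideal X S s"
proof -
  obtain z j where f': "f \<in> carrier L" and z: "z \<in> span S" and j: "Tpow j \<cdot> (f \<cdot> s \<oplus>\<^bsub>A\<^esub> z) \<in> X"
    using f unfolding T_torsion_ideal_def by blast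
  have zA: "z \<in> carrier A" using z span_subset_carrier[OF S] by blast
  have "Tpow j \<cdot> ((h \<otimes>\<^bsub>L\<^esub> f) \<cdot> s \<oplus>\<^bsub>A\<^esub> h \<cdot> z) = h \<cdot> (Tpow j \<cdot> (f \<cdot> s \<oplus>\<^bsub>A\<^esub> z))"
    using h f' zA s by (simp add: smult_assoc M.smult_r_distr smult_comm[of h "Tpow j"])
  then have "Tpow j \<cdot> ((h \<otimes>\<^bsub>L\<^esub> f) \<cdot> s \<oplus>\<^bsub>A\<^esub> h \<cdot> z) \<in> X"
    using submodD(4)[OF X h j] by simp
  moreover have "h \<cdot> z \<in> span S" using submodD(4)[OF span_submod[OF S] h z] .
  ultimately show ?thesis unfolding T_torsion_ideal_def using h f' by blast
qed

lemma T_torsion_ideal_add: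
  assumes X: "submod X" and S: "S \<subseteq> carrier A" and s: "s \<in> carrier A"
    and f: "f \<in> T_torsion_ideal X S s" and g: "g \<in> T_torsion_ideal X S s"
  shows "f \<oplus>\<^bsub>L\<^esub> g \<in> T_torsion_ideal X S s"
proof -
  obtain z1 j1 where f': "f \<in> carrier L" and z1: "z1 \<in> span S"
    and j1: "Tpow j1 \<cdot> (f \<cdot> s \<oplus>\<^bsub>A\<^esub> z1) \<in> X"
    using f unfolding T_torsion_ideal_def by blast
  obtain z2 j2 where g': "g \<in> carrier L" and z2: "z2 \<in> span S"
    and j2: "Tpow j2 \<cdot> (g \<cdot> s \<oplus>\<^bsub>A\<^esub> z2) \<in> X"
    using g unfolding T_torsion_ideal_def by blast
  have z1A: "z1 \<in> carrier A" and z2A: "z2 \<in> carrier A" using z1 z2 span_subset_carrier[OF S] by auto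
  have "Tpow (j1 + j2) \<cdot> ((f \<oplus>\<^bsub>L\<^esub> g) \<cdot> s \<oplus>\<^bsub>A\<^esub> (z1 \<oplus>\<^bsub>A\<^esub> z2))
      = Tpow j2 \<cdot> (Tpow j1 \<cdot> (f \<cdot> s \<oplus>\<^bsub>A\<^esub> z1)) \<oplus>\<^bsub>A\<^esub> Tpow j1 \<cdot> (Tpow j2 \<cdot> (g \<cdot> s \<oplus>\<^bsub>A\<^esub> z2))"
    using f' g' z1A z2A s
    by (simp add: M.smult_l_distr M.smult_r_distr M.M.a_ac Tpow_smult_Tpow add.commute)
  then have "Tpow (j1 + j2) \<cdot> ((f \<oplus>\<^bsub>L\<^esub> g) \<cdot> s \<oplus>\<^bsub>A\<^esub> (z1 \<oplus>\<^bsub>A\<^esub> z2)) \<in> X"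
    using submodD[OF X] j1 j2 by simp
  moreover have "z1 \<oplus>\<^bsub>A\<^esub> z2 \<in> span S" using submodD(3)[OF span_submod[OF S] z1 z2] .
  ultimately show ?thesis unfolding T_torsion_ideal_def using f' g' by blast
qed

lemma Tpow_smult_sum_in_submod:
  assumes X: "submod X" and Q: "Q \<in> carrier A" "Tpow j0 \<cdot> Q \<in> X" and z1: "z1 \<in> carrier A"
    and j: "Tpow j \<cdot> (Q \<oplus>\<^bsub>A\<^esub> z1) \<in> X" and bound: "Tpow (j + j0) \<cdot> z1 \<in> X \<Longrightarrow> Tpow a \<cdot> z1 \<in> X"
  shows "Tpow (j0 + a) \<cdot> (Q \<oplus>\<^bsub>A\<^esub> z1) \<in> X"
proof -
  note XD = submodD[OF X]
  have "Tpow j0 \<cdot> (Tpow j \<cdot> (Q \<oplus>\<^bsub>A\<^esub> z1)) \<ominus>\<^bsub>A\<^esub> Tpow j \<cdot> (Tpow j0 \<cdot> Q)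
      = Tpow (j + j0) \<cdot> Q \<oplus>\<^bsub>A\<^esub> Tpow (j + j0) \<cdot> z1 \<ominus>\<^bsub>A\<^esub> Tpow (j + j0) \<cdot> Q"
    using Q z1 by (simp add: M.smult_r_distr Tpow_smult_Tpow add.commute)
  also have "\<dots> = Tpow (j + j0) \<cdot> z1"
    using Q z1 by (intro add_diff_cancel_left_A) simp_all
  finally have "Tpow (j + j0) \<cdot> z1 \<in> X"
    using submod_diff[OF X] XD(4) j Q by (metis Tpow_closed)
  then have "Tpow a \<cdot> z1 \<in> X" by (rule bound)
  moreover have "Tpow (j0 + a) \<cdot> (Q \<oplus>\<^bsub>A\<^esub> z1) = Tpow a \<cdot> (Tpow j0 \<cdot> Q) \<oplus>\<^bsub>A\<^esub> Tpow j0 \<cdot> (Tpow a \<cdot> z1)"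
    using Q z1 by (simp add: M.smult_r_distr Tpow_smult_Tpow add.commute)
  ultimately show ?thesis using XD Q by simp
qed

text \<open>If \<open>e\<close> generates the ideal \<open>T_torsion_ideal X S s\<close> modulo \<open>p\<close>, with witness
  \<open>T\<^sup>j\<^sup>0 (e s + z\<^sub>0) \<in> X\<close>, then every element \<open>f s + z\<close> of \<open>span (insert s S)\<close>
  splits as \<open>(p h s + c (e s + z\<^sub>0)) + z\<^sub>1\<close> with \<open>z\<^sub>1 \<in> span S\<close>.\<close>

lemma T_torsion_bounded_insert:
  assumes X: "submod X" and S: "S \<subseteq> carrier A" and s: "s \<in> carrier A"
    and p_into_X: "\<forall>z\<in>span (insert s S). ppow 1 \<cdot> z \<in> X"
    and bound: "T_torsion_bounded X (span S) a"
  shows "\<exists>b. T_torsion_bounded X (span (insert s S)) b"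
proof -
  let ?I = "T_torsion_ideal X S s"
  note spS = submodD[OF span_submod[OF S]]
  have p_hs: "ppow 1 \<cdot> (h \<cdot> s) \<in> X" if h: "h \<in> carrier L" for h
  proof -
    have "submod (span (insert s S))" using span_submod S s by simp
    moreover have "s \<in> span (insert s S)" using span_superset by blast
    ultimately show ?thesis using submodD(4) h p_into_X by blast
  qed
  have "ppow 1 \<in> ?I"
    using p_hs[of "\<one>\<^bsub>L\<^esub>"] s spS(2) unfolding T_torsion_ideal_def
    by (intro CollectI conjI ppow_closed bexI[of _ "\<zero>\<^bsub>A\<^esub>"] exI[of _ 0]) auto
  then obtain e where "e \<in> ?I"
    and gen: "\<forall>f\<in>?I. \<exists>h\<in>carrier L. \<exists>c\<in>carrier L. f = ppow 1 \<otimes>\<^bsub>L\<^esub> h \<oplus>\<^bsub>L\<^esub> c \<otimes>\<^bsub>L\<^esub> e"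
    using ideal_containing_p_principal_mod_p[of ?I] T_torsion_ideal_add[OF X S s] T_torsion_ideal_mult[OF X S s]
    by (auto simp: T_torsion_ideal_def)
  then obtain z0 j0 where e: "e \<in> carrier L" and z0: "z0 \<in> span S"
    and j0: "Tpow j0 \<cdot> (e \<cdot> s \<oplus>\<^bsub>A\<^esub> z0) \<in> X"
    unfolding T_torsion_ideal_def by blast
  have "Tpow (j0 + a) \<cdot> z \<in> X" if z: "z \<in> span (insert s S)" and j: "Tpow j \<cdot> z \<in> X" for z j
  proof -
    obtain f zS where f: "f \<in> carrier L" and zS: "zS \<in> span S" and z_eq: "z = f \<cdot> s \<oplus>\<^bsub>A\<^esub> zS"
      using z span_insert[OF S s] by blast
    then have "f \<in> ?I" using j unfolding T_torsion_ideal_def by blast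
    then obtain h c where h: "h \<in> carrier L" and c: "c \<in> carrier L"
      and f_eq: "f = ppow 1 \<otimes>\<^bsub>L\<^esub> h \<oplus>\<^bsub>L\<^esub> c \<otimes>\<^bsub>L\<^esub> e"
      using gen by blast
    have zSA: "zS \<in> carrier A" and z0A: "z0 \<in> carrier A" using zS z0 span_subset_carrier[OF S] by auto
    define Q where "Q = ppow 1 \<cdot> (h \<cdot> s) \<oplus>\<^bsub>A\<^esub> c \<cdot> (e \<cdot> s \<oplus>\<^bsub>A\<^esub> z0)"
    define z1 where "z1 = zS \<ominus>\<^bsub>A\<^esub> c \<cdot> z0"
    have QA: "Q \<in> carrier A" and z1A: "z1 \<in> carrier A"
      using h c e s z0A zSA by (simp_all add: Q_def z1_def)
    have z_split: "z = Q \<oplus>\<^bsub>A\<^esub> z1"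
      using h c e s zSA z0A unfolding z_eq f_eq Q_def z1_def
      by (simp add: M.smult_l_distr M.smult_r_distr smult_assoc M.M.minus_eq M.M.a_ac
          M.M.r_neg M.M.r_neg1 M.M.r_neg2)
    have "Tpow j0 \<cdot> Q = Tpow j0 \<cdot> (ppow 1 \<cdot> (h \<cdot> s)) \<oplus>\<^bsub>A\<^esub> c \<cdot> (Tpow j0 \<cdot> (e \<cdot> s \<oplus>\<^bsub>A\<^esub> z0))"
      using h c e s z0A by (simp add: Q_def M.smult_r_distr smult_comm[of "Tpow j0" c])
    then have Q: "Tpow j0 \<cdot> Q \<in> X" using submodD[OF X] p_hs[OF h] j0 c by simp
    have "z1 \<in> span S" unfolding z1_def using submod_diff[OF span_submod[OF S] zS spS(4)[OF c z0]] .
    then have "Tpow (j + j0) \<cdot> z1 \<in> X \<Longrightarrow> Tpow a \<cdot> z1 \<in> X"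
      using bound unfolding T_torsion_bounded_def by blast
    then show ?thesis using Tpow_smult_sum_in_submod[OF X QA Q z1A] j z_split by blast
  qed
  then show ?thesis unfolding T_torsion_bounded_def by blast
qed

lemma T_torsion_bounded_mod_p:
  assumes "finite S" "S \<subseteq> carrier A" "submod X" "\<forall>z\<in>span S. ppow 1 \<cdot> z \<in> X"
  shows "\<exists>N. T_torsion_bounded X (span S) N"
  using assms
proof (induction S rule: finite_induct)
  case empty
  have "span {} \<subseteq> {\<zero>\<^bsub>A\<^esub>}" by (rule span_minimal[OF submod_zero]) simp
  then have "T_torsion_bounded X (span {}) 0"
    using submodD(2)[OF empty.prems(2)] unfolding T_torsion_bounded_def by auto
  then show ?case by blast
next
  case (insert s S)
  have "\<forall>z\<in>span S. ppow 1 \<cdot> z \<in> X"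
    using insert.prems span_mono[of S "insert s S"] by auto
  then obtain a where "T_torsion_bounded X (span S) a"
    using insert.IH insert.prems by auto
  then show ?case
    using T_torsion_bounded_insert insert.prems by auto
qed

lemma T_torsion_bounded_p_power:
  assumes "finite S" "S \<subseteq> carrier A" "\<forall>s\<in>S. ppow K \<cdot> s = \<zero>\<^bsub>A\<^esub>"
  shows "\<exists>N. T_torsion_bounded {\<zero>\<^bsub>A\<^esub>} (span S) N"
  using assms
proof (induction K arbitrary: S)
  case 0
  then have "S \<subseteq> {\<zero>\<^bsub>A\<^esub>}" by (metis M.smult_one ppow_0 singletonI subsetD subsetI)
  then have "span S \<subseteq> {\<zero>\<^bsub>A\<^esub>}" by (rule span_minimal[OF submod_zero])
  then have "T_torsion_bounded {\<zero>\<^bsub>A\<^esub>} (span S) 0" unfolding T_torsion_bounded_def by auto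
  then show ?case by blast
next
  case (Suc K)
  define S' where "S' = (\<lambda>s. ppow 1 \<cdot> s) ` S"
  have S': "finite S'" "S' \<subseteq> carrier A" using Suc.prems by (auto simp: S'_def)
  have "\<forall>s\<in>S'. ppow K \<cdot> s = \<zero>\<^bsub>A\<^esub>"
    using Suc.prems by (auto simp: S'_def ppow_smult_ppow subsetD)
  then obtain N' where N': "T_torsion_bounded {\<zero>\<^bsub>A\<^esub>} (span S') N'"
    using Suc.IH S' by blast
  have "\<forall>z\<in>span S. ppow 1 \<cdot> z \<in> span S'"
    using smult_span_image[OF Suc.prems(2) ppow_closed] by (simp add: S'_def)
  then obtain a where a: "T_torsion_bounded (span S') (span S) a"
    using T_torsion_bounded_mod_p[OF Suc.prems(1,2) span_submod[OF S'(2)]] by blast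
  have "Tpow (N' + a) \<cdot> z = \<zero>\<^bsub>A\<^esub>" if z: "z \<in> span S" and j: "Tpow j \<cdot> z = \<zero>\<^bsub>A\<^esub>" for z j
  proof -
    have zA: "z \<in> carrier A" using z span_subset_carrier[OF Suc.prems(2)] by blast
    have "Tpow j \<cdot> z \<in> span S'" using j submodD(2)[OF span_submod[OF S'(2)]] by simp
    then have aS': "Tpow a \<cdot> z \<in> span S'" using a z unfolding T_torsion_bounded_def by blast
    have "Tpow j \<cdot> (Tpow a \<cdot> z) = \<zero>\<^bsub>A\<^esub>"
      using j zA Tpow_smult_Tpow[OF zA, of a j] Tpow_smult_Tpow[OF zA, of j a] by (simp add: add.commute)
    then have "Tpow N' \<cdot> (Tpow a \<cdot> z) = \<zero>\<^bsub>A\<^esub>" using N' aS' unfolding T_torsion_bounded_def by blast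
    then show ?thesis using zA by (simp add: Tpow_smult_Tpow)
  qed
  then have "T_torsion_bounded {\<zero>\<^bsub>A\<^esub>} (span S) (N' + a)" unfolding T_torsion_bounded_def by blast
  then show ?case by blast
qed

lemma distinguished_annihilator_mod_p_power:
  assumes "g \<in> carrier L" "g \<noteq> \<zero>\<^bsub>L\<^esub>" "s \<in> carrier A" "g \<cdot> s = \<zero>\<^bsub>A\<^esub>"
  shows "\<exists>P m. distinguished p P \<and> ppow m \<cdot> (P \<cdot> s) = \<zero>\<^bsub>A\<^esub>"
proof -
  obtain m u where u: "u \<in> carrier L" "\<not> p_pow_dvd 1 u" and g_eq: "g = ppow m \<otimes>\<^bsub>L\<^esub> u"
    using p_power_factorization_nonzero[OF assms(1,2)] by blast
  obtain q where q: "q \<in> carrier L" and P: "distinguished p (u \<otimes>\<^bsub>L\<^esub> q)"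
    using weierstrass_preparation[OF u] by blast
  have "ppow m \<cdot> ((u \<otimes>\<^bsub>L\<^esub> q) \<cdot> s) = q \<cdot> (g \<cdot> s)"
    using u q assms(3) by (simp add: g_eq smult_assoc[symmetric] R.m_ac)
  then show ?thesis using P q assms(4) by auto
qed

lemma distinguished_annihilator_finite_mod_p_power:
  assumes "finite S" "S \<subseteq> carrier A" "\<forall>s\<in>S. \<exists>g\<in>carrier L. g \<noteq> \<zero>\<^bsub>L\<^esub> \<and> g \<cdot> s = \<zero>\<^bsub>A\<^esub>"
  shows "\<exists>G K. distinguished p G \<and> (\<forall>s\<in>S. ppow K \<cdot> (G \<cdot> s) = \<zero>\<^bsub>A\<^esub>)"
  using assms
proof (induction S rule: finite_induct)
  case empty
  then show ?case using distinguished_Tpow by blast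
next
  case (insert s S)
  obtain G K where G: "distinguished p G" and GK: "\<forall>t\<in>S. ppow K \<cdot> (G \<cdot> t) = \<zero>\<^bsub>A\<^esub>"
    using insert by auto
  obtain g where "g \<in> carrier L" "g \<noteq> \<zero>\<^bsub>L\<^esub>" "g \<cdot> s = \<zero>\<^bsub>A\<^esub>" using insert.prems(2) by auto
  then obtain P m where P: "distinguished p P" and Pm: "ppow m \<cdot> (P \<cdot> s) = \<zero>\<^bsub>A\<^esub>"
    using distinguished_annihilator_mod_p_power insert.prems(1) by blast
  have GL: "G \<in> carrier L" and PL: "P \<in> carrier L" using G P distinguished_closed by auto
  have "ppow (m + K) \<cdot> ((P \<otimes>\<^bsub>L\<^esub> G) \<cdot> t) = \<zero>\<^bsub>A\<^esub>" if t: "t \<in> insert s S" for t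
  proof -
    have tA: "t \<in> carrier A" using t insert.prems by auto
    have "ppow (m + K) \<cdot> ((P \<otimes>\<^bsub>L\<^esub> G) \<cdot> t) = (ppow K \<otimes>\<^bsub>L\<^esub> G) \<cdot> (ppow m \<cdot> (P \<cdot> t))"
      and "ppow (m + K) \<cdot> ((P \<otimes>\<^bsub>L\<^esub> G) \<cdot> t) = (ppow m \<otimes>\<^bsub>L\<^esub> P) \<cdot> (ppow K \<cdot> (G \<cdot> t))"
      using GL PL tA by (simp_all add: smult_assoc[symmetric] ppow_add[symmetric] R.m_ac)
    then show ?thesis using t Pm GK GL PL by auto
  qed
  then show ?case using distinguished_mult[OF P G] by blast
qed

lemma ord_eq_ess_ord_if_no_T_torsion:
  assumes y: "y \<in> Mtors p A"
    and no_T_torsion: "\<And>e j. Tpow j \<cdot> (ppow e \<cdot> y) = \<zero>\<^bsub>A\<^esub> \<Longrightarrow> ppow e \<cdot> y = \<zero>\<^bsub>A\<^esub>"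
  shows "ord_p p A y = ess_ord p A y"
proof -
  have yA: "y \<in> carrier A" using y by (simp add: Mtors_iff)
  obtain J where "ord_exp (Tpow J \<cdot> y) = ess_exp y"
    using ess_exp_eventually[OF y] by blast
  then have "Tpow J \<cdot> (ppow (ess_exp y) \<cdot> y) = \<zero>\<^bsub>A\<^esub>"
    using ord_exp_kills[OF Mtors_smult[OF y Tpow_closed, of J]] yA
    by (simp add: smult_comm[of "Tpow J"])
  then have "ord_exp y \<le> ess_exp y" by (intro ord_exp_le no_T_torsion)
  moreover have "ess_exp y \<le> ord_exp y" using ess_exp_le[of y 0] yA by simp
  ultimately show ?thesis using ess_ord_eq[OF y] ord_p_eq by simp
qed

lemma distinguished_ord_eq_ess_ord:
  assumes "fin_gen_Lambda p A" and "torsion_Lambda p A"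
  shows "\<exists>G. distinguished p G \<and> (\<forall>a\<in>carrier A. G \<cdot> a \<in> Mtors p A)
    \<and> (\<forall>a\<in>carrier A. ord_p p A (G \<cdot> a) = ess_ord p A (G \<cdot> a))"
proof -
  obtain S where S: "finite S" "S \<subseteq> carrier A" and A_span: "carrier A = span S"
    using assms(1) unfolding fin_gen_Lambda_def by blast
  obtain G0 K where G0: "distinguished p G0" and G0K: "\<forall>s\<in>S. ppow K \<cdot> (G0 \<cdot> s) = \<zero>\<^bsub>A\<^esub>"
    using distinguished_annihilator_finite_mod_p_power[OF S] assms(2) S(2)
    unfolding torsion_Lambda_def by blast
  have G0L: "G0 \<in> carrier L" using G0 distinguished_closed by blast
  define S1 where "S1 = (\<lambda>s. G0 \<cdot> s) ` S"
  have S1: "finite S1" "S1 \<subseteq> carrier A" using S G0L by (auto simp: S1_def)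
  obtain N where N: "T_torsion_bounded {\<zero>\<^bsub>A\<^esub>} (span S1) N"
    using T_torsion_bounded_p_power[OF S1] G0K by (auto simp: S1_def)
  have G0_span: "G0 \<cdot> a \<in> span S1" if "a \<in> carrier A" for a
    using smult_span_image[OF S(2) G0L] that A_span by (simp add: S1_def)
  have kill: "ppow K \<cdot> z = \<zero>\<^bsub>A\<^esub>" if "z \<in> span S1" for z
    using span_annihilated[OF S1(2) ppow_closed _ that] G0K by (auto simp: S1_def)
  define G where "G = Tpow N \<otimes>\<^bsub>L\<^esub> G0"
  have G_eq: "G \<cdot> a = Tpow N \<cdot> (G0 \<cdot> a)" if "a \<in> carrier A" for a
    using that G0L by (simp add: G_def smult_assoc)
  have GM: "G \<cdot> a \<in> Mtors p A" if a: "a \<in> carrier A" for a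
    using kill[OF G0_span[OF a]] a G0L Mtors_smult[of "G0 \<cdot> a" "Tpow N"]
    by (auto simp: G_eq Mtors_iff)
  have "ord_p p A (G \<cdot> a) = ess_ord p A (G \<cdot> a)" if a: "a \<in> carrier A" for a
  proof (rule ord_eq_ess_ord_if_no_T_torsion[OF GM[OF a]])
    fix e j assume "Tpow j \<cdot> (ppow e \<cdot> (G \<cdot> a)) = \<zero>\<^bsub>A\<^esub>"
    then have "Tpow (j + N) \<cdot> (ppow e \<cdot> (G0 \<cdot> a)) = \<zero>\<^bsub>A\<^esub>"
      using a G0L by (simp add: G_eq smult_comm[of "ppow e" "Tpow N"] Tpow_smult_Tpow)
    moreover have "ppow e \<cdot> (G0 \<cdot> a) \<in> span S1"
      using submodD(4)[OF span_submod[OF S1(2)] ppow_closed G0_span[OF a]] .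
    ultimately have "Tpow N \<cdot> (ppow e \<cdot> (G0 \<cdot> a)) = \<zero>\<^bsub>A\<^esub>"
      using N unfolding T_torsion_bounded_def by blast
    then show "ppow e \<cdot> (G \<cdot> a) = \<zero>\<^bsub>A\<^esub>"
      using a G0L by (simp add: G_eq smult_comm[of "ppow e" "Tpow N"])
  qed
  then show ?thesis using distinguished_mult[OF distinguished_Tpow G0] GM by (auto simp: G_def)
qed

end

theorem mainTheorem3:
  fixes p :: nat and A :: "(lam, 'a, 'm) module_scheme"
  assumes "prime p" and "odd p"
    and "module (Lambda p) A"
    and "fin_gen_Lambda p A" and "torsion_Lambda p A"
  shows
    "(\<forall>x l g. x \<in> Mtors p A \<and> p \<le> p ^ l \<and> ess_ord p A x = p ^ l
        \<and> g \<in> carrier (Lambda p) \<and> g \<odot>\<^bsub>A\<^esub> x = \<zero>\<^bsub>A\<^esub>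
        \<longrightarrow> (\<exists>h\<in>carrier (Lambda p). g = lam_int p (int p ^ l) \<otimes>\<^bsub>Lambda p\<^esub> h))
     \<and> (\<exists>G. distinguished p G
        \<and> (\<forall>a\<in>carrier A. G \<odot>\<^bsub>A\<^esub> a \<in> Mtors p A)
        \<and> (\<forall>a\<in>carrier A. ord_p p A (G \<odot>\<^bsub>A\<^esub> a) = ess_ord p A (G \<odot>\<^bsub>A\<^esub> a)))
     \<and> (\<forall>x c z. x \<in> carrier A - Dpart p A \<and> c \<in> Lpart p A \<and> z \<in> Mtors p A
        \<and> lam_int p (int p ^ delta p A x) \<odot>\<^bsub>A\<^esub> x = c \<oplus>\<^bsub>A\<^esub> z
        \<longrightarrow> c \<notin> {lam_int p (int p) \<odot>\<^bsub>A\<^esub> y | y. y \<in> Lpart p A})"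
proof -
  interpret iwasawa_module p A
    using assms(1,3) module.axioms(1)[OF assms(3)]
    by (intro iwasawa_module.intro iwasawa_algebra.intro iwasawa_algebra_axioms.intro)
  have part_i: "\<exists>h\<in>carrier L. g = ppow l \<otimes>\<^bsub>L\<^esub> h"
    if "x \<in> Mtors p A" "p \<le> p ^ l" "ess_ord p A x = p ^ l" "g \<in> carrier L" "g \<cdot> x = \<zero>\<^bsub>A\<^esub>"
    for x l g
  proof -
    have "ess_exp x = l"
      using that(1,3) ess_ord_eq p_gt_1 by (metis power_inject_exp)
    moreover have "0 < l" using that(2) p_gt_1 by (cases l) auto
    ultimately show ?thesis using annihilator_divisible_by_ess_ord that by blast
  qed
  show ?thesis
    using part_i distinguished_ord_eq_ess_ord[OF assms(4,5)] delta_part_not_p_divisible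
    by (simp add: ppow_def) blast
qed

end
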